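(* Let $\mathcal X,\mathcal Y$ be Polish spaces and $P_{XY},Q_{XY}$ Borel probability measures on $\mathcal X\times\mathcal Y$ with $X$-marginals $P_X,Q_X$. Then there exists a coupling $\pi$ of $P_{XY}$ and $Q_{XY}$, i.e. a joint law of $(X,Y,X',Y')$ with $(X,Y)\sim P_{XY}$ and $(X',Y')\sim Q_{XY}$, such that simultaneously $$\pi\{(X,Y)\ne(X',Y')\}=d_{\mathrm{TV}}(P_{XY},Q_{XY})\quad\text{and}\quad\pi\{X\ne X'\}=d_{\mathrm{TV}}(P_X,Q_X).$$
   Context: $d_{\mathrm{TV}}(P,Q)=\sup_E|P(E)-Q(E)|$. *)

theory Defs
  imports "HOL-Probability.Probability"
begin

definition tv_dist :: "'a measure \<Rightarrow> 'a measure \<Rightarrow> real" where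
  "tv_dist P Q = (SUP E\<in>sets P. \<bar>measure P E - measure Q E\<bar>)"

end

theory Submission
  imports Defs
begin

text \<open>Write \<open>P = m + P'\<close> and \<open>Q = m + Q'\<close>, where \<open>m\<close> is the common part of \<open>P\<close> and \<open>Q\<close>
  and \<open>P'\<close>, \<open>Q'\<close> are mutually singular; then \<open>d\<^sub>T\<^sub>V(P, Q) = \<parallel>P'\<parallel>\<close>. Every coupling of \<open>P'\<close>
  and \<open>Q'\<close> lives off the diagonal, so adding the diagonal copy of \<open>m\<close> to it gives a maximal
  coupling of \<open>P\<close> and \<open>Q\<close>. The first marginals split the same way, \<open>P\<^sub>X = m\<^sub>X + P'\<^sub>X\<close>, hence
  \<open>d\<^sub>T\<^sub>V(P\<^sub>X, Q\<^sub>X) = d\<^sub>T\<^sub>V(P'\<^sub>X, Q'\<^sub>X)\<close>, which is attained by a maximal coupling \<open>\<kappa>\<close> of \<open>P'\<^sub>X\<close>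
  and \<open>Q'\<^sub>X\<close>. Two applications of the gluing lemma for Polish spaces produce a coupling of \<open>P'\<close>
  and \<open>Q'\<close> whose pair of \<open>X\<close>-coordinates has law \<open>\<kappa>\<close>; the diagonal part adds nothing to
  either event, so both distances are attained simultaneously.\<close>

definition add_measure :: "'a measure \<Rightarrow> 'a measure \<Rightarrow> 'a measure" where
  "add_measure M N = measure_of (space M) (sets M) (\<lambda>A. emeasure M A + emeasure N A)"

lemma sets_add_measure [simp, measurable_cong]: "sets (add_measure M N) = sets M"
  unfolding add_measure_def by (simp add: sets.space_closed)

lemma space_add_measure [simp]: "space (add_measure M N) = space M"
  unfolding add_measure_def by (simp add: sets.space_closed)

lemma emeasure_add_measure:
  assumes "sets N = sets M" "A \<in> sets M"
  shows "emeasure (add_measure M N) A = emeasure M A + emeasure N A"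
  unfolding add_measure_def
proof (rule emeasure_measure_of_sigma)
  show "sigma_algebra (space M) (sets M)" by (rule sets.sigma_algebra_axioms)
  show "positive (sets M) (\<lambda>A. emeasure M A + emeasure N A)"
    using assms by (auto simp: positive_def)
  show "countably_additive (sets M) (\<lambda>A. emeasure M A + emeasure N A)"
  proof (rule countably_additiveI)
    fix F :: "nat \<Rightarrow> _"
    assume F: "range F \<subseteq> sets M" "disjoint_family F" "\<Union> (range F) \<in> sets M"
    have "(\<Sum>i. emeasure M (F i) + emeasure N (F i)) = (\<Sum>i. emeasure M (F i)) + (\<Sum>i. emeasure N (F i))"
      by (rule suminf_add[symmetric]) auto
    also have "\<dots> = emeasure M (\<Union> (range F)) + emeasure N (\<Union> (range F))"
      using F assms by (simp add: suminf_emeasure)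
    finally show "(\<Sum>i. emeasure M (F i) + emeasure N (F i)) = emeasure M (\<Union> (range F)) + emeasure N (\<Union> (range F))" .
  qed
qed (use assms in auto)

lemma finite_measure_add_measure:
  assumes "finite_measure M" "finite_measure N" "sets N = sets M"
  shows "finite_measure (add_measure M N)"
  using assms by (intro finite_measureI) (simp add: emeasure_add_measure finite_measure.emeasure_finite)

lemma measure_add_measure:
  assumes "finite_measure M" "finite_measure N" "sets N = sets M" "A \<in> sets M"
  shows "measure (add_measure M N) A = measure M A + measure N A"
  using assms
  by (simp add: emeasure_add_measure finite_measure.emeasure_eq_measure measure_def[of "add_measure M N"]
      ennreal_plus[symmetric] del: ennreal_plus)

lemma distr_add_measure:
  assumes "sets N = sets M" "f \<in> measurable M L"
  shows "distr (add_measure M N) L f = add_measure (distr M L f) (distr N L f)"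
proof (rule measure_eqI)
  fix A assume "A \<in> sets (distr (add_measure M N) L f)"
  then have A: "A \<in> sets L" by simp
  have fN: "f \<in> measurable N L" by (subst measurable_cong_sets[OF assms(1) refl]) (rule assms(2))
  have fMN: "f \<in> measurable (add_measure M N) L"
    by (subst measurable_cong_sets[OF sets_add_measure refl]) (rule assms(2))
  have "space N = space M" using assms(1) by (rule sets_eq_imp_space_eq)
  then have "emeasure (distr (add_measure M N) L f) A
      = emeasure M (f -` A \<inter> space M) + emeasure N (f -` A \<inter> space N)"
    using emeasure_distr[OF fMN A] emeasure_add_measure[OF assms(1) measurable_sets[OF assms(2) A]] by simp
  also have "\<dots> = emeasure (distr M L f) A + emeasure (distr N L f) A"
    using emeasure_distr[OF assms(2) A] emeasure_distr[OF fN A] by simp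
  also have "\<dots> = emeasure (add_measure (distr M L f) (distr N L f)) A"
    by (rule emeasure_add_measure[symmetric]) (use A in simp_all)
  finally show "emeasure (distr (add_measure M N) L f) A = emeasure (add_measure (distr M L f) (distr N L f)) A" .
qed simp

lemma space_eq_UNIV_if_sets_borel:
  "sets M = sets (borel :: 'a::topological_space measure) \<Longrightarrow> space M = UNIV"
  by (metis sets_eq_imp_space_eq space_borel)

lemma measurable_borel_if_continuous:
  "continuous_on UNIV f \<Longrightarrow> sets M = sets borel \<Longrightarrow> f \<in> measurable M borel"
  by (subst measurable_cong_sets[of M borel borel borel]) (auto intro: borel_measurable_continuous_onI)

lemma distr_distr_continuous:
  assumes "sets M = sets borel" "continuous_on UNIV f" "continuous_on UNIV g"
  shows "distr (distr M borel f) borel g = distr M borel (\<lambda>x. g (f x))"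
  using assms by (subst distr_distr) (auto intro!: measurable_borel_if_continuous simp: comp_def)

lemma emeasure_distr_continuous:
  assumes "sets M = sets borel" "continuous_on UNIV f" "A \<in> sets borel"
  shows "emeasure (distr M borel f) A = emeasure M (f -` A)"
  using emeasure_distr[OF measurable_borel_if_continuous[OF assms(2,1)] assms(3)]
    space_eq_UNIV_if_sets_borel[OF assms(1)] by simp

lemma vimage_continuous_in_sets:
  assumes "sets M = sets borel" "continuous_on UNIV f" "A \<in> sets borel"
  shows "f -` A \<in> sets M"
  using measurable_sets[OF measurable_borel_if_continuous[OF assms(2,1)] assms(3)]
    space_eq_UNIV_if_sets_borel[OF assms(1)] by simp

lemma finite_measure_distr_continuous:
  assumes "finite_measure M" "sets M = sets borel" "continuous_on UNIV f"
  shows "finite_measure (distr M borel f)"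
  using assms by (intro finite_measure.finite_measure_distr measurable_borel_if_continuous)

lemma Times_in_sets_borel:
  "A \<in> sets borel \<Longrightarrow> B \<in> sets borel \<Longrightarrow>
   A \<times> B \<in> sets (borel :: ('a::second_countable_topology \<times> 'b::second_countable_topology) measure)"
  by (metis borel_prod pair_measureI)

lemma offdiagonal_in_sets_borel: "{z::'a::t2_space \<times> 'a. fst z \<noteq> snd z} \<in> sets borel"
  by (intro borel_open open_Collect_neq continuous_intros)

lemma finite_measure_density_le:
  assumes "finite_measure (density M p)" "f \<in> borel_measurable M" "p \<in> borel_measurable M"
    "\<And>x. x \<in> space M \<Longrightarrow> f x \<le> p x"
  shows "finite_measure (density M f)"
proof (rule finite_measureI)
  have "emeasure (density M f) (space (density M f)) = (\<integral>\<^sup>+x. f x * indicator (space M) x \<partial>M)"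
    using assms by (simp add: emeasure_density)
  also have "\<dots> \<le> (\<integral>\<^sup>+x. p x * indicator (space M) x \<partial>M)"
    using assms(4) by (intro nn_integral_mono) (auto split: split_indicator)
  also have "\<dots> = emeasure (density M p) (space (density M p))"
    using assms by (simp add: emeasure_density)
  also have "\<dots> < \<infinity>"
    using finite_measure.emeasure_finite[OF assms(1)] by (simp add: top.not_eq_extremum)
  finally show "emeasure (density M f) (space (density M f)) \<noteq> \<infinity>" by simp
qed

lemma absolutely_continuous_add_measure:
  assumes "sets N = sets M"
  shows "absolutely_continuous (add_measure M N) M" "absolutely_continuous (add_measure M N) N"
proof -
  have "A \<in> null_sets M \<and> A \<in> null_sets N" if "A \<in> null_sets (add_measure M N)" for A
  proof -
    have A: "A \<in> sets M" "emeasure (add_measure M N) A = 0" using that by auto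
    then have "emeasure M A + emeasure N A = 0" using emeasure_add_measure[OF assms A(1)] by simp
    then show ?thesis using A(1) assms by auto
  qed
  then show "absolutely_continuous (add_measure M N) M" "absolutely_continuous (add_measure M N) N"
    unfolding absolutely_continuous_def by blast+
qed

lemma density_eq_add_measure_diff:
  assumes [measurable]: "f \<in> borel_measurable M" "g \<in> borel_measurable M" and le: "\<And>x. g x \<le> f x"
  shows "density M f = add_measure (density M g) (density M (\<lambda>x. f x - g x))"
proof (rule measure_eqI)
  fix A assume "A \<in> sets (density M f)"
  then have A [measurable]: "A \<in> sets M" by simp
  have "emeasure (add_measure (density M g) (density M (\<lambda>x. f x - g x))) A
      = (\<integral>\<^sup>+x. g x * indicator A x \<partial>M) + (\<integral>\<^sup>+x. (f x - g x) * indicator A x \<partial>M)"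
    using A by (subst emeasure_add_measure) (simp_all add: emeasure_density)
  also have "\<dots> = (\<integral>\<^sup>+x. g x * indicator A x + (f x - g x) * indicator A x \<partial>M)"
    by (intro nn_integral_add[symmetric]) measurable
  also have "\<dots> = (\<integral>\<^sup>+x. f x * indicator A x \<partial>M)"
    using le by (intro nn_integral_cong) (simp add: distrib_right[symmetric] add_diff_inverse_ennreal)
  finally show "emeasure (density M f) A = emeasure (add_measure (density M g) (density M (\<lambda>x. f x - g x))) A"
    using A by (simp add: emeasure_density)
qed simp

text \<open>With densities \<open>p\<close>, \<open>q\<close> of \<open>M\<close>, \<open>N\<close> with respect to \<open>M + N\<close>, the common part has
  density \<open>min p q\<close> and the remainders \<open>p - min p q\<close>, \<open>q - min p q\<close> live on \<open>{q < p}\<close> and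
  its complement.\<close>

lemma common_part_decomposition:
  assumes fM: "finite_measure M" and fN: "finite_measure N" and sN: "sets N = sets M"
  obtains m M' N' G where "finite_measure m" "finite_measure M'" "finite_measure N'"
    "sets m = sets M" "sets M' = sets m" "sets N' = sets m"
    "M = add_measure m M'" "N = add_measure m N'"
    "G \<in> sets m" "emeasure M' (space m - G) = 0" "emeasure N' G = 0"
proof -
  define \<mu> where "\<mu> = add_measure M N"
  have sets_\<mu> [simp]: "sets \<mu> = sets M" "space \<mu> = space M" unfolding \<mu>_def by simp_all
  interpret \<mu>: finite_measure \<mu> unfolding \<mu>_def by (rule finite_measure_add_measure[OF fM fN sN])
  have acM: "absolutely_continuous \<mu> M" and acN: "absolutely_continuous \<mu> N"
    unfolding \<mu>_def by (rule absolutely_continuous_add_measure[OF sN])+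
  define p where "p = RN_deriv \<mu> M"
  define q where "q = RN_deriv \<mu> N"
  have pM: "density \<mu> p = M" unfolding p_def by (rule \<mu>.density_RN_deriv[OF acM]) simp
  have qN: "density \<mu> q = N" unfolding q_def by (rule \<mu>.density_RN_deriv[OF acN]) (simp add: sN)
  have p [measurable]: "p \<in> borel_measurable \<mu>" and q [measurable]: "q \<in> borel_measurable \<mu>"
    unfolding p_def q_def by simp_all
  have min [measurable]: "(\<lambda>x. min (p x) (q x)) \<in> borel_measurable \<mu>" by measurable
  from p q have [measurable]: "p \<in> borel_measurable M" "q \<in> borel_measurable M"
    by (simp_all add: measurable_cong_sets[OF sets_\<mu>(1)[symmetric] refl])
  have pfin: "AE x in \<mu>. p x \<noteq> \<infinity>" unfolding p_def
    by (rule \<mu>.RN_deriv_finite[OF finite_measure.sigma_finite_measure[OF fM] acM]) simp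
  have qfin: "AE x in \<mu>. q x \<noteq> \<infinity>" unfolding q_def
    by (rule \<mu>.RN_deriv_finite[OF finite_measure.sigma_finite_measure[OF fN] acN]) (simp add: sN)
  define m where "m = density \<mu> (\<lambda>x. min (p x) (q x))"
  define M' where "M' = density \<mu> (\<lambda>x. p x - min (p x) (q x))"
  define N' where "N' = density \<mu> (\<lambda>x. q x - min (p x) (q x))"
  define G where "G = {x\<in>space M. q x < p x}"
  have sets: "sets m = sets M" "sets M' = sets M" "sets N' = sets M"
    unfolding m_def M'_def N'_def by simp_all
  have fin_m: "finite_measure m" unfolding m_def
    by (rule finite_measure_density_le[of _ p]) (use fM pM in auto)
  have fin_M': "finite_measure M'" unfolding M'_def
    by (rule finite_measure_density_le[of _ p]) (use fM pM in auto)
  have fin_N': "finite_measure N'" unfolding N'_def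
    by (rule finite_measure_density_le[of _ q]) (use fN qN in auto)
  have G: "G \<in> sets M" unfolding G_def by measurable
  have eqM: "M = add_measure m M'"
    unfolding m_def M'_def pM[symmetric] by (rule density_eq_add_measure_diff[OF p min]) simp
  have eqN: "N = add_measure m N'"
    unfolding m_def N'_def qN[symmetric] by (rule density_eq_add_measure_diff[OF q min]) simp
  have M'G: "emeasure M' (space M - G) = 0"
  proof -
    have "emeasure M' (space M - G) = (\<integral>\<^sup>+x. (p x - min (p x) (q x)) * indicator (space M - G) x \<partial>\<mu>)"
      unfolding M'_def using G by (simp add: emeasure_density sets.Diff)
    also have "\<dots> = (\<integral>\<^sup>+x. 0 \<partial>\<mu>)"
      using pfin by (intro nn_integral_cong_AE) (auto simp: G_def split: split_indicator)
    finally show ?thesis by simp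
  qed
  have N'G: "emeasure N' G = 0"
  proof -
    have "emeasure N' G = (\<integral>\<^sup>+x. (q x - min (p x) (q x)) * indicator G x \<partial>\<mu>)"
      unfolding N'_def using G by (simp add: emeasure_density)
    also have "\<dots> = (\<integral>\<^sup>+x. 0 \<partial>\<mu>)"
      using qfin by (intro nn_integral_cong_AE) (auto simp: G_def split: split_indicator)
    finally show ?thesis by simp
  qed
  have "space m = space M" unfolding m_def by simp
  show ?thesis
    by (rule that[OF fin_m fin_M' fin_N' sets(1) _ _ eqM eqN _ _ N'G])
      (use sets G M'G \<open>space m = space M\<close> in simp_all)
qed

lemma tv_dist_add_measure:
  assumes "finite_measure m" "finite_measure M" "finite_measure N" "sets M = sets m" "sets N = sets m"
  shows "tv_dist (add_measure m M) (add_measure m N) = tv_dist M N"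
  unfolding tv_dist_def
proof (rule SUP_cong)
  show "sets (add_measure m M) = sets M" using assms by simp
  fix E assume "E \<in> sets M"
  then have E: "E \<in> sets m" using assms(4) by simp
  show "\<bar>measure (add_measure m M) E - measure (add_measure m N) E\<bar> = \<bar>measure M E - measure N E\<bar>"
    by (simp only: measure_add_measure[OF assms(1,2,4) E] measure_add_measure[OF assms(1,3,5) E])
qed

lemma tv_dist_singular:
  assumes "finite_measure M" "finite_measure N" "sets N = sets M"
    and G: "G \<in> sets M" "emeasure M (space M - G) = 0" "emeasure N G = 0"
    and mass: "measure M (space M) = measure N (space N)"
  shows "tv_dist M N = measure M (space M)"
proof -
  interpret M: finite_measure M by fact
  interpret N: finite_measure N by fact
  have bound: "\<bar>measure M E - measure N E\<bar> \<le> measure M (space M)" for E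
  proof (rule abs_leI)
    have "measure M E - measure N E \<le> measure M E" by simp
    also have "\<dots> \<le> measure M (space M)" by (rule M.bounded_measure)
    finally show "measure M E - measure N E \<le> measure M (space M)" .
    have "- (measure M E - measure N E) \<le> measure N E" by simp
    also have "\<dots> \<le> measure N (space N)" by (rule N.bounded_measure)
    finally show "- (measure M E - measure N E) \<le> measure M (space M)" using mass by simp
  qed
  have "measure M (space M - G) = 0" using G(2) by (simp add: measure_def)
  then have "measure M G = measure M (space M)" using M.finite_measure_compl[OF G(1)] by simp
  moreover have "measure N G = 0" using G(3) by (simp add: N.emeasure_eq_measure)
  ultimately have attained: "measure M (space M) = \<bar>measure M G - measure N G\<bar>" by simp
  show ?thesis
    unfolding tv_dist_def
  proof (rule cSup_eq_maximum)
    show "measure M (space M) \<in> (\<lambda>E. \<bar>measure M E - measure N E\<bar>) ` sets M"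
      using attained G(1) by (rule image_eqI)
  next
    fix x assume "x \<in> (\<lambda>E. \<bar>measure M E - measure N E\<bar>) ` sets M"
    then show "x \<le> measure M (space M)" using bound by blast
  qed
qed

lemma emeasure_space_cancel_common_part:
  assumes "finite_measure m" "sets M = sets m" "sets N = sets m"
    and "emeasure (add_measure m M) (space m) = emeasure (add_measure m N) (space m)"
  shows "emeasure M (space m) = emeasure N (space m)"
  using assms(4) finite_measure.emeasure_finite[OF assms(1), of "space m"]
  by (simp add: emeasure_add_measure assms(2,3) ennreal_add_left_cancel)

lemma tv_dist_common_part:
  assumes "finite_measure m" "finite_measure M" "finite_measure N" "sets M = sets m" "sets N = sets m"
    and "G \<in> sets m" "emeasure M (space m - G) = 0" "emeasure N G = 0"
    and mass: "emeasure M (space m) = emeasure N (space m)"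
  shows "tv_dist (add_measure m M) (add_measure m N) = measure M (space m)"
proof -
  have space: "space M = space m" "space N = space m"
    using sets_eq_imp_space_eq[OF assms(4)] sets_eq_imp_space_eq[OF assms(5)] .
  have "tv_dist (add_measure m M) (add_measure m N) = tv_dist M N"
    by (rule tv_dist_add_measure[OF assms(1-5)])
  also have "\<dots> = measure M (space M)"
  proof (rule tv_dist_singular[OF assms(2,3)])
    show "measure M (space M) = measure N (space N)" using mass space by (simp add: measure_def)
  qed (use assms space in simp_all)
  finally show ?thesis using space by simp
qed

definition coupling :: "('a::topological_space \<times> 'b::topological_space) measure \<Rightarrow> 'a measure \<Rightarrow> 'b measure \<Rightarrow> bool" where
  "coupling \<kappa> M N \<longleftrightarrow>
    finite_measure \<kappa> \<and> sets \<kappa> = sets borel \<and> distr \<kappa> borel fst = M \<and> distr \<kappa> borel snd = N"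

definition diagonal_measure :: "'a::topological_space measure \<Rightarrow> ('a \<times> 'a) measure" where
  "diagonal_measure m = distr m borel (\<lambda>x. (x, x))"

lemma coupling_diagonal_measure:
  fixes m :: "'a::second_countable_topology measure"
  assumes "finite_measure m" "sets m = sets borel"
  shows "coupling (diagonal_measure m) m m"
proof -
  have diag: "(\<lambda>x. (x, x)) \<in> measurable m borel"
    using assms(2) by (intro measurable_borel_if_continuous continuous_intros)
  have "distr (distr m borel (\<lambda>x. (x, x))) borel fst = m" "distr (distr m borel (\<lambda>x. (x, x))) borel snd = m"
    using diag assms(2) by (subst distr_distr; auto simp: comp_def
      intro!: distr_id2 measurable_borel_if_continuous continuous_intros)+
  then show ?thesis
    unfolding coupling_def diagonal_measure_def
    using finite_measure.finite_measure_distr[OF assms(1) diag] by simp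
qed

lemma coupling_add_measure:
  fixes \<kappa> :: "('a::second_countable_topology \<times> 'b::second_countable_topology) measure"
  assumes \<kappa>: "coupling \<kappa> M N" and \<rho>: "coupling \<rho> M' N'"
  shows "coupling (add_measure \<kappa> \<rho>) (add_measure M M') (add_measure N N')"
proof -
  have sets: "sets \<rho> = sets \<kappa>" "sets \<kappa> = sets borel"
    using assms unfolding coupling_def by simp_all
  have "fst \<in> measurable \<kappa> borel" "snd \<in> measurable \<kappa> borel"
    using sets(2) by (auto intro!: measurable_borel_if_continuous continuous_intros)
  then have "distr (add_measure \<kappa> \<rho>) borel fst = add_measure M M'"
    "distr (add_measure \<kappa> \<rho>) borel snd = add_measure N N'"
    using assms unfolding coupling_def by (simp_all add: distr_add_measure[OF sets(1)])
  moreover have "finite_measure (add_measure \<kappa> \<rho>)"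
    using assms sets unfolding coupling_def by (intro finite_measure_add_measure) simp_all
  ultimately show ?thesis using sets unfolding coupling_def by simp
qed

lemma measure_add_diagonal_measure_off_diagonal:
  fixes m :: "'a::second_countable_topology measure"
  assumes "finite_measure m" "sets m = sets borel" "coupling \<rho> M N"
    and "E \<in> sets borel" "\<And>x. (x, x) \<notin> E"
  shows "measure (add_measure (diagonal_measure m) \<rho>) E = measure \<rho> E"
proof -
  have "coupling (diagonal_measure m) m m" by (rule coupling_diagonal_measure[OF assms(1,2)])
  moreover have "(\<lambda>x. (x, x)) -` E = {}" using assms(5) by auto
  then have "measure (diagonal_measure m) E = 0"
    unfolding diagonal_measure_def using assms
    by (simp add: measure_distr measurable_borel_if_continuous continuous_intros)
  ultimately show ?thesis
    using assms(3,4) unfolding coupling_def by (simp add: measure_add_measure)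
qed

lemma measure_off_diagonal_coupling_singular:
  fixes \<rho> :: "('a::{second_countable_topology, t2_space} \<times> 'a) measure"
  assumes "coupling \<rho> M N" "G \<in> sets borel" "emeasure M (UNIV - G) = 0" "emeasure N G = 0"
  shows "measure \<rho> {z. fst z \<noteq> snd z} = measure M UNIV"
proof -
  interpret finite_measure \<rho> using assms(1) by (simp add: coupling_def)
  have sets: "sets \<rho> = sets borel" and M: "M = distr \<rho> borel fst" and N: "N = distr \<rho> borel snd"
    using assms(1) by (simp_all add: coupling_def)
  have space: "space \<rho> = UNIV" by (rule space_eq_UNIV_if_sets_borel[OF sets])
  have fst: "continuous_on UNIV (fst :: 'a \<times> 'a \<Rightarrow> 'a)" and snd: "continuous_on UNIV (snd :: 'a \<times> 'a \<Rightarrow> 'a)"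
    by (intro continuous_intros)+
  have GC: "UNIV - G \<in> sets borel" using assms(2) by (metis sets.compl_sets space_borel)
  have A1: "fst -` (UNIV - G) \<in> sets \<rho>" by (rule vimage_continuous_in_sets[OF sets fst GC])
  have A2: "snd -` G \<in> sets \<rho>" by (rule vimage_continuous_in_sets[OF sets snd assms(2)])
  have "emeasure \<rho> {z. fst z = snd z} \<le> emeasure \<rho> (fst -` (UNIV - G) \<union> snd -` G)"
    by (rule emeasure_mono) (use A1 A2 in auto)
  also have "\<dots> \<le> emeasure \<rho> (fst -` (UNIV - G)) + emeasure \<rho> (snd -` G)"
    by (rule emeasure_subadditive[OF A1 A2])
  also have "\<dots> = emeasure M (UNIV - G) + emeasure N G"
    unfolding M N using GC assms(2) by (simp add: emeasure_distr_continuous[OF sets] fst snd)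
  finally have diag_null: "measure \<rho> {z. fst z = snd z} = 0" using assms(3,4) by (simp add: measure_def)
  have "{z :: 'a \<times> 'a. fst z = snd z} = UNIV - {z. fst z \<noteq> snd z}" by auto
  then have diag: "{z :: 'a \<times> 'a. fst z = snd z} \<in> sets \<rho>"
    using sets offdiagonal_in_sets_borel[where 'a='a] by (metis sets.compl_sets space_borel)
  have "{z. fst z \<noteq> snd z} = space \<rho> - {z. fst z = snd z}" using space by auto
  then have "measure \<rho> {z. fst z \<noteq> snd z} = measure \<rho> (space \<rho>) - measure \<rho> {z. fst z = snd z}"
    using finite_measure_compl[OF diag] by simp
  also have "\<dots> = measure M UNIV"
    unfolding M diag_null using space by (simp add: measure_distr measurable_borel_if_continuous[OF fst sets])
  finally show ?thesis .
qed

lemma ennreal_scale_cancel: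
  assumes "0 \<le> k" "x \<le> ennreal k"
  shows "ennreal (if k = 0 then 0 else 1 / k) * (x * ennreal k) = x"
proof (cases "k = 0")
  case False
  then have "ennreal (1 / k) * ennreal k = 1" using assms(1) by (simp add: ennreal_mult'[symmetric])
  moreover have "ennreal (1 / k) * (x * ennreal k) = (ennreal (1 / k) * ennreal k) * x" by (simp add: ac_simps)
  ultimately show ?thesis using False by simp
qed (use assms in simp)

lemma coupling_scaled_product:
  fixes M :: "'a::second_countable_topology measure" and N :: "'b::second_countable_topology measure"
  assumes fM: "finite_measure M" and fN: "finite_measure N"
    and sM: "sets M = sets borel" and sN: "sets N = sets borel"
    and mass: "emeasure M UNIV = emeasure N UNIV"
  obtains \<rho> where "coupling \<rho> M N"
proof -
  interpret M: finite_measure M by fact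
  interpret N: finite_measure N by fact
  define k where "k = measure M UNIV"
  have eM: "emeasure M UNIV = ennreal k" and eN: "emeasure N UNIV = ennreal k"
    using M.emeasure_eq_measure[of UNIV] mass unfolding k_def by simp_all
  define c where "c = ennreal (if k = 0 then 0 else 1 / k)"
  have k_nonneg: "0 \<le> k" unfolding k_def by simp
  have scale: "c * (x * ennreal k) = x" if "x \<le> ennreal k" for x
    using ennreal_scale_cancel[OF k_nonneg that] unfolding c_def .
  define \<rho> where "\<rho> = density (M \<Otimes>\<^sub>M N) (\<lambda>_. c)"
  have sets_\<rho>: "sets \<rho> = sets (borel :: ('a \<times> 'b) measure)"
    unfolding \<rho>_def sets_density sets_pair_measure_cong[OF sM sN] borel_prod ..
  have emeasure_\<rho>: "emeasure \<rho> (A \<times> B) = c * (emeasure M A * emeasure N B)"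
    if "A \<in> sets borel" "B \<in> sets borel" for A B
  proof -
    have A: "A \<in> sets M" and B: "B \<in> sets N" using that sM sN by simp_all
    have "emeasure \<rho> (A \<times> B) = c * emeasure (M \<Otimes>\<^sub>M N) (A \<times> B)"
      unfolding \<rho>_def by (rule emeasure_density_const[OF pair_measureI[OF A B]])
    then show ?thesis by (simp only: N.emeasure_pair_measure_Times[OF A B])
  qed
  have fst: "continuous_on UNIV (fst :: 'a \<times> 'b \<Rightarrow> 'a)" and snd: "continuous_on UNIV (snd :: 'a \<times> 'b \<Rightarrow> 'b)"
    by (intro continuous_intros)+
  have "finite_measure \<rho>"
  proof (rule finite_measureI)
    have "emeasure \<rho> (space \<rho>) = c * (ennreal k * ennreal k)"
      using emeasure_\<rho>[of UNIV UNIV] eM eN space_eq_UNIV_if_sets_borel[OF sets_\<rho>] by simp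
    then show "emeasure \<rho> (space \<rho>) \<noteq> \<infinity>"
      by (simp add: c_def ennreal_mult_eq_top_iff)
  qed
  moreover have "distr \<rho> borel fst = M"
  proof (rule measure_eqI)
    fix A :: "'a set" assume "A \<in> sets (distr \<rho> borel fst)"
    then have A: "A \<in> sets borel" by simp
    have "emeasure (distr \<rho> borel fst) A = emeasure \<rho> (A \<times> UNIV)"
      using emeasure_distr_continuous[OF sets_\<rho> fst A] by (simp add: vimage_fst)
    also have "\<dots> = c * (emeasure M A * ennreal k)"
      using emeasure_\<rho>[OF A, of UNIV] eN by simp
    also have "\<dots> = emeasure M A"
      using emeasure_mono[of A UNIV M] A sM eM by (intro scale) simp
    finally show "emeasure (distr \<rho> borel fst) A = emeasure M A" .
  qed (simp add: sM)
  moreover have "distr \<rho> borel snd = N"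
  proof (rule measure_eqI)
    fix B :: "'b set" assume "B \<in> sets (distr \<rho> borel snd)"
    then have B: "B \<in> sets borel" by simp
    have "emeasure (distr \<rho> borel snd) B = emeasure \<rho> (UNIV \<times> B)"
      using emeasure_distr_continuous[OF sets_\<rho> snd B] by (simp add: vimage_snd)
    also have "\<dots> = c * (emeasure N B * ennreal k)"
      using emeasure_\<rho>[OF _ B, of UNIV] eM by (simp add: mult.commute)
    also have "\<dots> = emeasure N B"
      using emeasure_mono[of B UNIV N] B sN eN by (intro scale) simp
    finally show "emeasure (distr \<rho> borel snd) B = emeasure N B" .
  qed (simp add: sN)
  ultimately show ?thesis using sets_\<rho> by (intro that) (simp add: coupling_def)
qed

text \<open>\<open>cond_density A T x\<close> is a version of the conditional probability that the second coordinate
  lies in \<open>T\<close> given that the first one is \<open>x\<close>. Each \<open>T\<close> gets its own Radon-Nikodym derivative,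
  so additivity in \<open>T\<close> holds only almost everywhere and only for finitely many sets at a time.\<close>

definition cond_density :: "('a::topological_space \<times> 'b::topological_space) measure \<Rightarrow> 'b set \<Rightarrow> 'a \<Rightarrow> ennreal" where
  "cond_density A T = RN_deriv (distr A borel fst) (distr (density A (\<lambda>w. indicator T (snd w))) borel fst)"

lemma AE_eq_if_nn_integral_indicator_eq:
  assumes fin: "finite_measure \<nu>" and h1: "h1 \<in> borel_measurable \<nu>" and h2: "h2 \<in> borel_measurable \<nu>"
    and eq: "\<And>S. S \<in> sets \<nu> \<Longrightarrow> (\<integral>\<^sup>+x. h1 x * indicator S x \<partial>\<nu>) = (\<integral>\<^sup>+x. h2 x * indicator S x \<partial>\<nu>)"
    and f: "(\<integral>\<^sup>+x. h1 x \<partial>\<nu>) \<noteq> \<infinity>"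
  shows "AE x in \<nu>. h1 x = h2 x"
proof -
  have "density \<nu> h1 = density \<nu> h2"
    by (rule measure_eqI) (simp_all add: emeasure_density h1 h2 eq)
  then show ?thesis using finite_density_unique[OF h1 h2 _ _ f] by simp
qed

lemma measurable_cond_density [measurable]: "cond_density A T \<in> borel_measurable (distr A borel fst)"
  unfolding cond_density_def by (rule borel_measurable_RN_deriv)

lemma borel_measurable_cond_density [measurable]: "cond_density A T \<in> borel_measurable borel"
  using measurable_cond_density by (simp add: measurable_cong_sets[of "distr A borel fst" borel borel borel])

lemma measurable_fst_borel: "sets A = sets borel \<Longrightarrow> fst \<in> measurable A borel"
  by (intro measurable_borel_if_continuous continuous_intros)

lemma measurable_snd_borel: "sets A = sets borel \<Longrightarrow> snd \<in> measurable A borel"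
  by (intro measurable_borel_if_continuous continuous_intros)

context
  fixes A :: "('a::second_countable_topology \<times> 'b::second_countable_topology) measure"
  assumes fA: "finite_measure A" and sA: "sets A = sets borel"
begin

lemma nn_integral_cond_density:
  assumes T: "T \<in> sets borel" and S: "S \<in> sets borel"
  shows "(\<integral>\<^sup>+x. cond_density A T x * indicator S x \<partial>distr A borel fst) = emeasure A (S \<times> T)"
proof -
  interpret A: finite_measure A by (rule fA)
  define \<nu> where "\<nu> = distr A borel (fst :: 'a \<times> 'b \<Rightarrow> 'a)"
  define AT where "AT = distr (density A (\<lambda>w. indicator T (snd w))) borel (fst :: 'a \<times> 'b \<Rightarrow> 'a)"
  have spA: "space A = UNIV" using sA by (rule space_eq_UNIV_if_sets_borel)
  interpret \<nu>: finite_measure \<nu> unfolding \<nu>_def by (rule A.finite_measure_distr[OF measurable_fst_borel[OF sA]])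
  have indm: "(\<lambda>w. indicator T (snd w) :: ennreal) \<in> borel_measurable A"
    using T measurable_snd_borel[OF sA] by measurable
  have fstd: "fst \<in> measurable (density A (\<lambda>w. indicator T (snd w))) borel"
    using measurable_fst_borel[OF sA] by simp
  have eAT: "emeasure AT R = emeasure A (R \<times> T)" if R: "R \<in> sets borel" for R
  proof -
    have RT: "R \<times> T \<in> sets A" using Times_in_sets_borel[OF R T] sA by simp
    have "emeasure AT R = emeasure (density A (\<lambda>w. indicator T (snd w))) (fst -` R \<inter> space A)"
      unfolding AT_def using emeasure_distr[OF fstd R] by simp
    also have "\<dots> = (\<integral>\<^sup>+w. indicator T (snd w) * indicator (fst -` R \<inter> space A) w \<partial>A)"
      using measurable_sets[OF measurable_fst_borel[OF sA] R] by (simp add: emeasure_density[OF indm])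
    also have "\<dots> = (\<integral>\<^sup>+w. indicator (R \<times> T) w \<partial>A)"
      by (intro nn_integral_cong) (auto simp: spA split: split_indicator)
    also have "\<dots> = emeasure A (R \<times> T)" using RT by simp
    finally show ?thesis .
  qed
  have e\<nu>: "emeasure \<nu> R = emeasure A (R \<times> UNIV)" if R: "R \<in> sets borel" for R
    unfolding \<nu>_def using emeasure_distr[OF measurable_fst_borel[OF sA] R] spA by (simp add: vimage_fst)
  have ac: "absolutely_continuous \<nu> AT"
    unfolding absolutely_continuous_def
  proof
    fix R assume "R \<in> null_sets \<nu>"
    then have R: "R \<in> sets borel" "emeasure \<nu> R = 0" unfolding \<nu>_def by auto
    have "emeasure A (R \<times> T) \<le> emeasure A (R \<times> UNIV)"
      using Times_in_sets_borel[OF R(1), of UNIV] sA by (intro emeasure_mono) auto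
    then have "emeasure AT R = 0" using eAT[OF R(1)] e\<nu>[OF R(1)] R(2) by simp
    then show "R \<in> null_sets AT" using R(1) unfolding AT_def by auto
  qed
  have dens: "density \<nu> (cond_density A T) = AT"
    unfolding cond_density_def \<nu>_def[symmetric] AT_def[symmetric]
    by (rule \<nu>.density_RN_deriv[OF ac]) (simp add: AT_def \<nu>_def)
  have "(\<integral>\<^sup>+x. cond_density A T x * indicator S x \<partial>\<nu>) = emeasure (density \<nu> (cond_density A T)) S"
    using S measurable_cond_density by (simp add: emeasure_density \<nu>_def)
  also have "\<dots> = emeasure A (S \<times> T)" using dens eAT[OF S] by simp
  finally show ?thesis unfolding \<nu>_def .
qed

lemma AE_cond_density_eqI:
  assumes h: "h \<in> borel_measurable borel"
    and eq: "\<And>S. S \<in> sets borel \<Longrightarrow> (\<integral>\<^sup>+x. h x * indicator S x \<partial>distr A borel fst) = emeasure A (S \<times> T)"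
    and T: "T \<in> sets borel"
  shows "AE x in distr A borel fst. cond_density A T x = h x"
proof (rule AE_eq_if_nn_integral_indicator_eq)
  interpret A: finite_measure A by (rule fA)
  show "finite_measure (distr A borel (fst :: 'a \<times> 'b \<Rightarrow> 'a))" by (rule A.finite_measure_distr[OF measurable_fst_borel[OF sA]])
  show "cond_density A T \<in> borel_measurable (distr A borel fst)" by (rule measurable_cond_density)
  show "h \<in> borel_measurable (distr A borel fst)" using h by simp
  fix S :: "'a set" assume "S \<in> sets (distr A borel fst)"
  then have S: "S \<in> sets borel" by simp
  show "(\<integral>\<^sup>+x. cond_density A T x * indicator S x \<partial>distr A borel fst) = (\<integral>\<^sup>+x. h x * indicator S x \<partial>distr A borel fst)"
    using nn_integral_cond_density[OF T S] eq[OF S] by simp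
next
  interpret A: finite_measure A by (rule fA)
  have "(\<integral>\<^sup>+x. cond_density A T x \<partial>distr A borel fst) = (\<integral>\<^sup>+x. cond_density A T x * indicator UNIV x \<partial>distr A borel fst)"
    by simp
  also have "\<dots> = emeasure A (UNIV \<times> T)" using nn_integral_cond_density[OF T sets.top[of borel]] by simp
  finally show "(\<integral>\<^sup>+x. cond_density A T x \<partial>distr A borel fst) \<noteq> \<infinity>" using A.emeasure_finite by simp
qed

lemma AE_cond_density_UN:
  assumes J: "finite J" and T: "\<And>j. j \<in> J \<Longrightarrow> T j \<in> sets borel" and dis: "disjoint_family_on T J"
  shows "AE x in distr A borel fst. cond_density A (\<Union>j\<in>J. T j) x = (\<Sum>j\<in>J. cond_density A (T j) x)"
proof (rule AE_cond_density_eqI)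
  show "(\<lambda>x. \<Sum>j\<in>J. cond_density A (T j) x) \<in> borel_measurable borel"
    using borel_measurable_cond_density by (intro borel_measurable_sum) auto
  show "(\<Union>j\<in>J. T j) \<in> sets borel" using T J by auto
  fix S :: "'a set" assume S: "S \<in> sets borel"
  have "(\<integral>\<^sup>+x. (\<Sum>j\<in>J. cond_density A (T j) x) * indicator S x \<partial>distr A borel fst)
      = (\<integral>\<^sup>+x. (\<Sum>j\<in>J. cond_density A (T j) x * indicator S x) \<partial>distr A borel fst)"
    by (simp add: sum_distrib_right)
  also have "\<dots> = (\<Sum>j\<in>J. \<integral>\<^sup>+x. cond_density A (T j) x * indicator S x \<partial>distr A borel fst)"
    using S borel_measurable_cond_density by (intro nn_integral_sum) auto
  also have "\<dots> = (\<Sum>j\<in>J. emeasure A (S \<times> T j))"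
    using nn_integral_cond_density[OF T S] by simp
  also have "\<dots> = emeasure A (\<Union>j\<in>J. S \<times> T j)"
    using J T S sA Times_in_sets_borel dis by (intro sum_emeasure) (auto simp: disjoint_family_on_def, blast)
  also have "(\<Union>j\<in>J. S \<times> T j) = S \<times> (\<Union>j\<in>J. T j)" by auto
  finally show "(\<integral>\<^sup>+x. (\<Sum>j\<in>J. cond_density A (T j) x) * indicator S x \<partial>distr A borel fst) = emeasure A (S \<times> (\<Union>j\<in>J. T j))" .
qed

lemma AE_cond_density_UNIV: "AE x in distr A borel fst. cond_density A UNIV x = 1"
proof (rule AE_cond_density_eqI)
  fix S :: "'a set" assume S: "S \<in> sets borel"
  interpret A: finite_measure A by (rule fA)
  have spA: "space A = UNIV" using sA by (rule space_eq_UNIV_if_sets_borel)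
  show "(\<integral>\<^sup>+x. 1 * indicator S x \<partial>distr A borel fst) = emeasure A (S \<times> UNIV)"
    using S emeasure_distr[OF measurable_fst_borel[OF sA] S] spA by (simp add: vimage_fst)
qed auto

end

definition atom :: "'a set set \<Rightarrow> 'a set set \<Rightarrow> 'a set" where
  "atom \<T> K = {y. \<forall>\<tau>\<in>\<T>. y \<in> \<tau> \<longleftrightarrow> \<tau> \<in> K}"

lemma atom_in_sets_borel:
  assumes "finite \<T>" "\<And>\<tau>. \<tau> \<in> \<T> \<Longrightarrow> \<tau> \<in> sets (borel :: 'a::topological_space measure)"
  shows "atom \<T> K \<in> sets borel"
proof (cases "\<T> = {}")
  case False
  have atom: "atom \<T> K = (\<Inter>\<tau>\<in>\<T>. if \<tau> \<in> K then \<tau> else UNIV - \<tau>)"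
    unfolding atom_def by auto
  show ?thesis unfolding atom using assms False by (intro sets.finite_INT) auto
qed (simp add: atom_def)

lemma Union_atoms:
  assumes "\<tau> \<in> \<T>"
  shows "(\<Union>K\<in>{K \<in> Pow \<T>. \<tau> \<in> K}. atom \<T> K) = \<tau>"
proof
  show "\<tau> \<subseteq> (\<Union>K\<in>{K \<in> Pow \<T>. \<tau> \<in> K}. atom \<T> K)"
  proof
    fix y assume "y \<in> \<tau>"
    then show "y \<in> (\<Union>K\<in>{K \<in> Pow \<T>. \<tau> \<in> K}. atom \<T> K)"
      using assms unfolding atom_def by (intro UN_I[of "{\<tau>'\<in>\<T>. y \<in> \<tau>'}"]) auto
  qed
qed (use assms in \<open>auto simp: atom_def\<close>)

lemma disjoint_family_on_atom: "disjoint_family_on (atom \<T>) (Pow \<T>)"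
  unfolding disjoint_family_on_def atom_def by auto

lemma AE_eq_sum_atoms:
  fixes F :: "'b::topological_space set \<Rightarrow> 'a \<Rightarrow> ennreal"
  assumes F_UN: "\<And>(J :: 'b set set set) T. finite J \<Longrightarrow> (\<And>j. j \<in> J \<Longrightarrow> T j \<in> sets borel) \<Longrightarrow>
      disjoint_family_on T J \<Longrightarrow> AE x in \<nu>. F (\<Union>j\<in>J. T j) x = (\<Sum>j\<in>J. F (T j) x)"
    and fin: "finite \<T>" and sets: "\<And>\<tau>. \<tau> \<in> \<T> \<Longrightarrow> \<tau> \<in> sets borel"
  shows "AE x in \<nu>. \<forall>\<tau>\<in>\<T>. F \<tau> x = (\<Sum>K\<in>{K \<in> Pow \<T>. \<tau> \<in> K}. F (atom \<T> K) x)"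
proof (rule AE_finite_allI[OF fin])
  fix \<tau> assume "\<tau> \<in> \<T>"
  have "AE x in \<nu>. F (\<Union>K\<in>{K \<in> Pow \<T>. \<tau> \<in> K}. atom \<T> K) x = (\<Sum>K\<in>{K \<in> Pow \<T>. \<tau> \<in> K}. F (atom \<T> K) x)"
    using fin atom_in_sets_borel[OF fin sets]
      disjoint_family_on_mono[OF _ disjoint_family_on_atom[of \<T>], of "{K \<in> Pow \<T>. \<tau> \<in> K}"]
    by (intro F_UN) auto
  then show "AE x in \<nu>. F \<tau> x = (\<Sum>K\<in>{K \<in> Pow \<T>. \<tau> \<in> K}. F (atom \<T> K) x)"
    using Union_atoms[OF \<open>\<tau> \<in> \<T>\<close>] by simp
qed

lemma sum_mult_sums_reorder:
  fixes a :: "'t set \<Rightarrow> ennreal" and b :: "'u set \<Rightarrow> ennreal"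
  assumes I: "finite I" and fT: "finite \<T>" and fU: "finite \<U>"
    and TI: "\<And>i. i \<in> I \<Longrightarrow> T i \<in> \<T>" and UI: "\<And>i. i \<in> I \<Longrightarrow> U i \<in> \<U>"
  shows "(\<Sum>i\<in>I. s i * (\<Sum>K\<in>{K \<in> Pow \<T>. T i \<in> K}. a K) * (\<Sum>L\<in>{L \<in> Pow \<U>. U i \<in> L}. b L))
    = (\<Sum>K\<in>Pow \<T>. \<Sum>L\<in>Pow \<U>. a K * b L * (\<Sum>i\<in>I. s i * (if T i \<in> K then 1 else 0) * (if U i \<in> L then 1 else 0)))"
proof -
  have fPT: "finite (Pow \<T>)" and fPU: "finite (Pow \<U>)" using fT fU by simp_all
  have "(\<Sum>i\<in>I. s i * (\<Sum>K\<in>{K \<in> Pow \<T>. T i \<in> K}. a K) * (\<Sum>L\<in>{L \<in> Pow \<U>. U i \<in> L}. b L))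
      = (\<Sum>i\<in>I. s i * (\<Sum>K\<in>Pow \<T>. if T i \<in> K then a K else 0) * (\<Sum>L\<in>Pow \<U>. if U i \<in> L then b L else 0))"
    by (simp only: sum.inter_filter[OF fPT] sum.inter_filter[OF fPU])
  also have "\<dots> = (\<Sum>i\<in>I. \<Sum>K\<in>Pow \<T>. \<Sum>L\<in>Pow \<U>. a K * b L * (s i * (if T i \<in> K then 1 else 0) * (if U i \<in> L then 1 else 0)))"
  proof (rule sum.cong[OF refl])
    fix i assume "i \<in> I"
    have "s i * (\<Sum>K\<in>Pow \<T>. if T i \<in> K then a K else 0) * (\<Sum>L\<in>Pow \<U>. if U i \<in> L then b L else 0)
        = (\<Sum>K\<in>Pow \<T>. \<Sum>L\<in>Pow \<U>. s i * (if T i \<in> K then a K else 0) * (if U i \<in> L then b L else 0))"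
      by (simp add: sum_distrib_left sum_distrib_right sum_product mult.assoc) (rule sum.swap)
    also have "\<dots> = (\<Sum>K\<in>Pow \<T>. \<Sum>L\<in>Pow \<U>. a K * b L * (s i * (if T i \<in> K then 1 else 0) * (if U i \<in> L then 1 else 0)))"
      by (intro sum.cong refl) (simp add: ac_simps)
    finally show "s i * (\<Sum>K\<in>Pow \<T>. if T i \<in> K then a K else 0) * (\<Sum>L\<in>Pow \<U>. if U i \<in> L then b L else 0)
        = (\<Sum>K\<in>Pow \<T>. \<Sum>L\<in>Pow \<U>. a K * b L * (s i * (if T i \<in> K then 1 else 0) * (if U i \<in> L then 1 else 0)))" .
  qed
  also have "\<dots> = (\<Sum>K\<in>Pow \<T>. \<Sum>i\<in>I. \<Sum>L\<in>Pow \<U>. a K * b L * (s i * (if T i \<in> K then 1 else 0) * (if U i \<in> L then 1 else 0)))"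
    by (rule sum.swap)
  also have "\<dots> = (\<Sum>K\<in>Pow \<T>. \<Sum>L\<in>Pow \<U>. \<Sum>i\<in>I. a K * b L * (s i * (if T i \<in> K then 1 else 0) * (if U i \<in> L then 1 else 0)))"
    by (intro sum.cong refl sum.swap)
  also have "\<dots> = (\<Sum>K\<in>Pow \<T>. \<Sum>L\<in>Pow \<U>. a K * b L * (\<Sum>i\<in>I. s i * (if T i \<in> K then 1 else 0) * (if U i \<in> L then 1 else 0)))"
    by (simp add: sum_distrib_left)
  finally show ?thesis .
qed

text \<open>An identity between finite sums of boxes transfers to the conditional densities once all sets
  involved are split into the atoms of the finite algebra they generate.\<close>

lemma AE_sum_indicator_times_cong:
  fixes F :: "'b::topological_space set \<Rightarrow> 'a \<Rightarrow> ennreal" and Gf :: "'c::topological_space set \<Rightarrow> 'a \<Rightarrow> ennreal"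
    and \<nu> :: "'a measure"
  assumes F_UN: "\<And>(J :: 'b set set set) T. finite J \<Longrightarrow> (\<And>j. j \<in> J \<Longrightarrow> T j \<in> sets borel) \<Longrightarrow>
      disjoint_family_on T J \<Longrightarrow> AE x in \<nu>. F (\<Union>j\<in>J. T j) x = (\<Sum>j\<in>J. F (T j) x)"
  and G_UN: "\<And>(J :: 'c set set set) U. finite J \<Longrightarrow> (\<And>j. j \<in> J \<Longrightarrow> U j \<in> sets borel) \<Longrightarrow>
      disjoint_family_on U J \<Longrightarrow> AE x in \<nu>. Gf (\<Union>j\<in>J. U j) x = (\<Sum>j\<in>J. Gf (U j) x)"
  and I: "finite I" and J: "finite J"
  and mI: "\<And>i. i \<in> I \<Longrightarrow> T i \<in> sets borel \<and> U i \<in> sets borel"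
  and mJ: "\<And>j. j \<in> J \<Longrightarrow> T' j \<in> sets borel \<and> U' j \<in> sets borel"
  and eq: "\<And>x y z. (\<Sum>i\<in>I. indicator (S i) x * indicator (T i) y * indicator (U i) z)
     = (\<Sum>j\<in>J. indicator (S' j) x * indicator (T' j) y * indicator (U' j) z :: ennreal)"
  shows "AE x in \<nu>. (\<Sum>i\<in>I. indicator (S i) x * F (T i) x * Gf (U i) x)
     = (\<Sum>j\<in>J. indicator (S' j) x * F (T' j) x * Gf (U' j) x)"
proof -
  define \<T> where "\<T> = T ` I \<union> T' ` J"
  define \<U> where "\<U> = U ` I \<union> U' ` J"
  have fT: "finite \<T>" and fU: "finite \<U>" unfolding \<T>_def \<U>_def using I J by auto
  have mT: "\<tau> \<in> sets borel" if "\<tau> \<in> \<T>" for \<tau> using that mI mJ unfolding \<T>_def by auto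
  have mU: "\<tau> \<in> sets borel" if "\<tau> \<in> \<U>" for \<tau> using that mI mJ unfolding \<U>_def by auto
  have AEF: "AE x in \<nu>. \<forall>\<tau>\<in>\<T>. F \<tau> x = (\<Sum>K\<in>{K \<in> Pow \<T>. \<tau> \<in> K}. F (atom \<T> K) x)"
    by (rule AE_eq_sum_atoms[OF F_UN fT mT])
  have AEG: "AE x in \<nu>. \<forall>\<tau>\<in>\<U>. Gf \<tau> x = (\<Sum>L\<in>{L \<in> Pow \<U>. \<tau> \<in> L}. Gf (atom \<U> L) x)"
    by (rule AE_eq_sum_atoms[OF G_UN fU mU])
  have F_empty: "AE x in \<nu>. F {} x = 0"
    using F_UN[of "{}" "\<lambda>_. {}"] by (simp add: disjoint_family_on_def)
  have G_empty: "AE x in \<nu>. Gf {} x = 0"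
    using G_UN[of "{}" "\<lambda>_. {}"] by (simp add: disjoint_family_on_def)
  show ?thesis
    using AEF AEG F_empty G_empty
  proof eventually_elim
    case (elim x)
    define \<Phi> where "\<Phi> K L = (\<Sum>i\<in>I. indicator (S i) x * (if T i \<in> K then 1 else 0) * (if U i \<in> L then 1 else 0 :: ennreal))" for K L
    define \<Phi>' where "\<Phi>' K L = (\<Sum>j\<in>J. indicator (S' j) x * (if T' j \<in> K then 1 else 0) * (if U' j \<in> L then 1 else 0 :: ennreal))" for K L
    have "(\<Sum>i\<in>I. indicator (S i) x * F (T i) x * Gf (U i) x)
        = (\<Sum>i\<in>I. indicator (S i) x * (\<Sum>K\<in>{K \<in> Pow \<T>. T i \<in> K}. F (atom \<T> K) x) * (\<Sum>L\<in>{L \<in> Pow \<U>. U i \<in> L}. Gf (atom \<U> L) x))"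
      using elim(1,2) by (intro sum.cong refl) (auto simp: \<T>_def \<U>_def)
    also have "\<dots> = (\<Sum>K\<in>Pow \<T>. \<Sum>L\<in>Pow \<U>. F (atom \<T> K) x * Gf (atom \<U> L) x * \<Phi> K L)"
      unfolding \<Phi>_def by (rule sum_mult_sums_reorder[OF I fT fU]) (auto simp: \<T>_def \<U>_def)
    also have "\<dots> = (\<Sum>K\<in>Pow \<T>. \<Sum>L\<in>Pow \<U>. F (atom \<T> K) x * Gf (atom \<U> L) x * \<Phi>' K L)"
    proof (intro sum.cong refl)
      fix K L assume K: "K \<in> Pow \<T>" and L: "L \<in> Pow \<U>"
      show "F (atom \<T> K) x * Gf (atom \<U> L) x * \<Phi> K L = F (atom \<T> K) x * Gf (atom \<U> L) x * \<Phi>' K L"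
      proof (cases "atom \<T> K = {} \<or> atom \<U> L = {}")
        case True
        then show ?thesis using elim(3,4) by auto
      next
        case False
        then obtain y z where y: "y \<in> atom \<T> K" and z: "z \<in> atom \<U> L" by blast
        have Ky: "\<And>\<tau>. \<tau> \<in> \<T> \<Longrightarrow> (\<tau> \<in> K) = (y \<in> \<tau>)" using y unfolding atom_def by auto
        have Lz: "\<And>\<tau>. \<tau> \<in> \<U> \<Longrightarrow> (\<tau> \<in> L) = (z \<in> \<tau>)" using z unfolding atom_def by auto
        have "\<Phi> K L = (\<Sum>i\<in>I. indicator (S i) x * indicator (T i) y * indicator (U i) z)"
          unfolding \<Phi>_def using Ky Lz by (intro sum.cong refl) (auto simp: \<T>_def \<U>_def indicator_def)
        also have "\<dots> = (\<Sum>j\<in>J. indicator (S' j) x * indicator (T' j) y * indicator (U' j) z)" by (rule eq)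
        also have "\<dots> = \<Phi>' K L"
          unfolding \<Phi>'_def using Ky Lz by (intro sum.cong refl) (auto simp: \<T>_def \<U>_def indicator_def)
        finally show ?thesis by simp
      qed
    qed
    also have "\<dots> = (\<Sum>j\<in>J. indicator (S' j) x * (\<Sum>K\<in>{K \<in> Pow \<T>. T' j \<in> K}. F (atom \<T> K) x) * (\<Sum>L\<in>{L \<in> Pow \<U>. U' j \<in> L}. Gf (atom \<U> L) x))"
      unfolding \<Phi>'_def by (rule sum_mult_sums_reorder[OF J fT fU, symmetric]) (auto simp: \<T>_def \<U>_def)
    also have "\<dots> = (\<Sum>j\<in>J. indicator (S' j) x * F (T' j) x * Gf (U' j) x)"
      using elim(1,2) by (intro sum.cong refl) (auto simp: \<T>_def \<U>_def)
    finally show ?case .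
  qed
qed

definition borel_boxes :: "('a::topological_space \<times> 'b::topological_space \<times> 'c::topological_space) set set" where
  "borel_boxes = {S \<times> (T \<times> U) | S T U. S \<in> sets borel \<and> T \<in> sets borel \<and> U \<in> sets borel}"

lemma borel_boxes_decomp:
  assumes "R \<in> borel_boxes"
  shows "R = fst ` R \<times> (fst ` snd ` R \<times> snd ` snd ` R)" "fst ` R \<in> sets borel"
    "fst ` snd ` R \<in> sets borel" "snd ` snd ` R \<in> sets borel"
proof -
  obtain S T U where R: "R = S \<times> (T \<times> U)" "S \<in> sets borel" "T \<in> sets borel" "U \<in> sets borel"
    using assms unfolding borel_boxes_def by blast
  show "R = fst ` R \<times> (fst ` snd ` R \<times> snd ` snd ` R)"
    unfolding R(1) by (auto simp: image_iff)
  show "fst ` R \<in> sets borel"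
    using R by (cases "R = {}") (auto simp: fst_image_times snd_image_times)
  show "fst ` snd ` R \<in> sets borel"
    using R by (cases "R = {}") (auto simp: fst_image_times snd_image_times)
  show "snd ` snd ` R \<in> sets borel"
    using R by (cases "R = {}") (auto simp: fst_image_times snd_image_times)
qed

lemma borel_boxesI: "S \<in> sets borel \<Longrightarrow> T \<in> sets borel \<Longrightarrow> U \<in> sets borel \<Longrightarrow> S \<times> (T \<times> U) \<in> borel_boxes"
  unfolding borel_boxes_def by blast

lemma semiring_of_sets_borel_boxes: "semiring_of_sets UNIV (borel_boxes :: ('a::topological_space \<times> 'b::topological_space \<times> 'c::topological_space) set set)"
proof
  show "borel_boxes \<subseteq> Pow UNIV" by simp
  show "{} \<in> borel_boxes" using borel_boxesI[of "{}" UNIV UNIV] by simp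
  fix a b :: "('a \<times> 'b \<times> 'c) set" assume a: "a \<in> borel_boxes" and b: "b \<in> borel_boxes"
  obtain S T U where A: "a = S \<times> (T \<times> U)" "S \<in> sets borel" "T \<in> sets borel" "U \<in> sets borel"
    using a unfolding borel_boxes_def by blast
  obtain S' T' U' where B: "b = S' \<times> (T' \<times> U')" "S' \<in> sets borel" "T' \<in> sets borel" "U' \<in> sets borel"
    using b unfolding borel_boxes_def by blast
  have "a \<inter> b = (S \<inter> S') \<times> ((T \<inter> T') \<times> (U \<inter> U'))" unfolding A B by auto
  then show "a \<inter> b \<in> borel_boxes" using A B by (auto intro!: borel_boxesI)
  define C where "C = {(S - S') \<times> (T \<times> U), (S \<inter> S') \<times> ((T - T') \<times> U), (S \<inter> S') \<times> ((T \<inter> T') \<times> (U - U'))}"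
  have "C \<subseteq> borel_boxes" unfolding C_def using A B by (auto intro!: borel_boxesI)
  moreover have "finite C" unfolding C_def by simp
  moreover have "disjoint C" unfolding C_def disjoint_def disjnt_def by auto
  moreover have "a - b = \<Union>C" unfolding C_def A B by auto
  ultimately show "\<exists>C\<subseteq>borel_boxes. finite C \<and> disjoint C \<and> a - b = \<Union>C" by blast
qed

lemma compact_subset_measure_approx:
  fixes M :: "'d::polish_space measure"
  assumes fM: "finite_measure M" and sM: "sets M = sets borel" and S: "S \<in> sets borel" and e: "e > 0"
  shows "\<exists>K. K \<subseteq> S \<and> compact K \<and> emeasure M (S - K) \<le> ennreal e"
proof -
  interpret M: finite_measure M by (rule fM)
  have SM: "S \<in> sets M" using S sM by simp
  show ?thesis
  proof (cases "measure M S \<le> e")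
    case True
    then show ?thesis using SM by (intro exI[of _ "{}"]) (auto simp: M.emeasure_eq_measure intro: ennreal_leI)
  next
    case False
    have "emeasure M S = (SUP K\<in>{K. K \<subseteq> S \<and> compact K}. emeasure M K)"
    proof -
      have fin: "emeasure M (space M) \<noteq> \<infinity>" using M.emeasure_finite by simp
      show ?thesis using inner_regular[OF sM fin S] by simp
    qed
    moreover have "ennreal (measure M S - e) < emeasure M S"
      using False e by (simp add: M.emeasure_eq_measure ennreal_less_iff)
    ultimately obtain K where K: "K \<subseteq> S" "compact K" "ennreal (measure M S - e) < emeasure M K"
      by (metis (no_types, lifting) less_SUP_iff mem_Collect_eq)
    have KM: "K \<in> sets M" using K(2) sM by (simp add: borel_compact)
    have "measure M S - e < measure M K" using K(3) False by (simp add: M.emeasure_eq_measure ennreal_less_iff)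
    moreover have "measure M (S - K) = measure M S - measure M K"
      using M.finite_measure_Diff[OF SM KM K(1)] .
    ultimately have "measure M (S - K) \<le> e" by simp
    then show ?thesis using K M.emeasure_eq_measure by (intro exI[of _ K]) (simp add: ennreal_leI)
  qed
qed

lemma sum_power_half: "(\<Sum>i\<le>n. (1/2::real) ^ i) = 2 - (1/2) ^ n"
  by (induction n) (auto simp: field_simps)

lemma sets_borel_prod_eq_sigma_Times:
  "sets (borel :: ('d::second_countable_topology \<times> 'e::second_countable_topology) measure)
    = sigma_sets UNIV {a \<times> b | a b. a \<in> sets borel \<and> b \<in> sets borel}"
proof -
  have "sets (borel :: ('d \<times> 'e) measure) = sets ((borel :: 'd measure) \<Otimes>\<^sub>M (borel :: 'e measure))"
    unfolding borel_prod ..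
  then show ?thesis by (simp add: sets_pair_measure)
qed

lemma sets_borel_eq_sigma_borel_boxes:
  "sets (borel :: ('a::second_countable_topology \<times> 'b::second_countable_topology \<times> 'c::second_countable_topology) measure)
    = sigma_sets UNIV borel_boxes"
proof -
  define Eb where "Eb = {a \<times> b | a b. a \<in> sets (borel :: 'b measure) \<and> b \<in> sets (borel :: 'c measure)}"
  have "sets (borel :: ('a \<times> 'b \<times> 'c) measure) = sets ((borel :: 'a measure) \<Otimes>\<^sub>M (borel :: ('b \<times> 'c) measure))"
    unfolding borel_prod ..
  also have "\<dots> = sets (sigma (space (borel :: 'a measure) \<times> space (borel :: ('b \<times> 'c) measure))
      {a \<times> b | a b. a \<in> sets borel \<and> b \<in> Eb})"
  proof (rule sets_pair_eq[where Ca="{UNIV}" and Cb="{UNIV}"])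
    show "sets (borel :: 'a measure) \<subseteq> Pow (space borel)" by simp
    show "sets (borel :: 'a measure) = sigma_sets (space borel) (sets borel)" by (rule sets.sigma_sets_eq[symmetric])
    show "Eb \<subseteq> Pow (space (borel :: ('b \<times> 'c) measure))" by simp
    show "sets (borel :: ('b \<times> 'c) measure) = sigma_sets (space borel) Eb"
      unfolding Eb_def by (simp add: sets_borel_prod_eq_sigma_Times)
    show "{UNIV} \<subseteq> Eb" unfolding Eb_def by (auto intro!: exI[of _ UNIV])
  qed auto
  also have "{a \<times> b | a b. a \<in> sets borel \<and> b \<in> Eb} = borel_boxes"
    unfolding Eb_def borel_boxes_def by blast
  finally show ?thesis by (simp add: sets_measure_of_conv)
qed

lemma measure_eq_if_eq_on_Times:
  fixes M :: "('d::second_countable_topology \<times> 'e::second_countable_topology) measure"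
  assumes sN: "sets N = sets borel" and sM: "sets M = sets borel" and fN: "finite_measure N"
    and eq: "\<And>S T. S \<in> sets borel \<Longrightarrow> T \<in> sets borel \<Longrightarrow> emeasure N (S \<times> T) = emeasure M (S \<times> T)"
  shows "N = M"
proof (rule measure_eqI_generator_eq[where E="{a \<times> b | a b. a \<in> sets borel \<and> b \<in> sets borel}" and \<Omega>=UNIV and A="\<lambda>_. UNIV"])
  show "Int_stable {a \<times> b | a b. a \<in> sets (borel :: 'd measure) \<and> b \<in> sets (borel :: 'e measure)}"
    unfolding Int_stable_def
  proof safe
    fix S T S' T' :: "_ set" assume "S \<in> sets (borel :: 'd measure)" "T \<in> sets (borel :: 'e measure)"
      "S' \<in> sets (borel :: 'd measure)" "T' \<in> sets (borel :: 'e measure)"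
    then show "\<exists>a b. S \<times> T \<inter> S' \<times> T' = a \<times> b \<and> a \<in> sets borel \<and> b \<in> sets borel"
      by (intro exI[of _ "S \<inter> S'"] exI[of _ "T \<inter> T'"]) auto
  qed
  show "sets N = sigma_sets UNIV {a \<times> b | a b. a \<in> sets borel \<and> b \<in> sets borel}" using sN sets_borel_prod_eq_sigma_Times by simp
  show "sets M = sigma_sets UNIV {a \<times> b | a b. a \<in> sets borel \<and> b \<in> sets borel}" using sM sets_borel_prod_eq_sigma_Times by simp
  show "range (\<lambda>_. UNIV) \<subseteq> {a \<times> b | a b. a \<in> sets (borel :: 'd measure) \<and> b \<in> sets (borel :: 'e measure)}"
    by (auto intro!: exI[of _ UNIV])
  show "emeasure N UNIV \<noteq> \<infinity>" for i :: nat
    using finite_measure.emeasure_finite[OF fN, of UNIV] by simp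
qed (use eq in auto)

lemma Inter_nested_compact_nonempty:
  fixes L :: "nat \<Rightarrow> 'a::t2_space set"
  assumes "\<And>n. compact (L n)" "\<And>n. L n \<noteq> {}" "\<And>m n. m \<le> n \<Longrightarrow> L n \<subseteq> L m"
  shows "(\<Inter>n. L n) \<noteq> {}"
proof -
  have "L 0 \<inter> \<Inter>(range L) \<noteq> {}"
  proof (rule compact_imp_fip)
    show "compact (L 0)" "\<And>T. T \<in> range L \<Longrightarrow> closed T"
      using assms(1) by (auto intro: compact_imp_closed)
    fix F' assume "finite F'" "F' \<subseteq> range L"
    then obtain N where N: "finite N" "F' = L ` N" by (metis finite_subset_image)
    define m where "m = Max (insert 0 N)"
    have "L m \<subseteq> L n" if "n \<in> insert 0 N" for n
      using assms(3) N(1) that unfolding m_def by simp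
    then have "L m \<subseteq> L 0 \<inter> \<Inter>F'" using N(2) by auto
    then show "L 0 \<inter> \<Inter>F' \<noteq> {}" using assms(2)[of m] by blast
  qed
  then show ?thesis by blast
qed

context
  fixes A :: "('a::polish_space \<times> 'b::polish_space) measure" and B :: "('a \<times> 'c::polish_space) measure"
  assumes fA: "finite_measure A" and fB: "finite_measure B" and sA: "sets A = sets borel" and sB: "sets B = sets borel"
    and marg: "distr A borel fst = distr B borel fst"
begin

definition "glue_base = distr A borel (fst :: 'a \<times> 'b \<Rightarrow> 'a)"

text \<open>Given the common first coordinate, the glued measure makes the other two independent: the box
  \<open>S \<times> T \<times> U\<close> gets the mass \<open>\<integral>\<^sub>S A(T|x) B(U|x) d\<nu>(x)\<close>.\<close>

definition "glue_box S T U = (\<integral>\<^sup>+x. indicator S x * cond_density A T x * cond_density B U x \<partial>glue_base)"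
definition "glue_box_fun (R :: ('a \<times> 'b \<times> 'c) set) = glue_box (fst ` R) (fst ` snd ` R) (snd ` snd ` R)"

lemma finite_measure_glue_base: "finite_measure glue_base"
  unfolding glue_base_def using fA by (rule finite_measure.finite_measure_distr[OF _ measurable_fst_borel[OF sA]])

lemma sets_glue_base[simp]: "sets glue_base = sets borel" unfolding glue_base_def by simp

lemma space_glue_base[simp]: "space glue_base = UNIV" unfolding glue_base_def by simp

lemma glue_base_eq_distr_B: "glue_base = distr B borel fst" unfolding glue_base_def marg ..

lemma measurable_cond_density_A[measurable]: "cond_density A T \<in> borel_measurable glue_base"
  using borel_measurable_cond_density by (simp add: measurable_cong_sets[OF sets_glue_base refl])

lemma measurable_cond_density_B[measurable]: "cond_density B U \<in> borel_measurable glue_base"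
  using borel_measurable_cond_density by (simp add: measurable_cong_sets[OF sets_glue_base refl])

lemma AE_cond_density_A_UN: "finite J \<Longrightarrow> (\<And>j. j \<in> J \<Longrightarrow> T j \<in> sets borel) \<Longrightarrow> disjoint_family_on T J \<Longrightarrow>
    AE x in glue_base. cond_density A (\<Union>j\<in>J. T j) x = (\<Sum>j\<in>J. cond_density A (T j) x)"
  unfolding glue_base_def by (rule AE_cond_density_UN[OF fA sA])

lemma AE_cond_density_B_UN: "finite J \<Longrightarrow> (\<And>j. j \<in> J \<Longrightarrow> U j \<in> sets borel) \<Longrightarrow> disjoint_family_on U J \<Longrightarrow>
    AE x in glue_base. cond_density B (\<Union>j\<in>J. U j) x = (\<Sum>j\<in>J. cond_density B (U j) x)"
  unfolding glue_base_eq_distr_B by (rule AE_cond_density_UN[OF fB sB])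

lemma AE_cond_density_A_UNIV: "AE x in glue_base. cond_density A UNIV x = 1" unfolding glue_base_def by (rule AE_cond_density_UNIV[OF fA sA])
lemma AE_cond_density_B_UNIV: "AE x in glue_base. cond_density B UNIV x = 1" unfolding glue_base_eq_distr_B by (rule AE_cond_density_UNIV[OF fB sB])

lemma AE_cond_density_A_empty: "AE x in glue_base. cond_density A {} x = 0"
  using AE_cond_density_A_UN[of "{}" "\<lambda>_. {}"] by (simp add: disjoint_family_on_def)
lemma AE_cond_density_B_empty: "AE x in glue_base. cond_density B {} x = 0"
  using AE_cond_density_B_UN[of "{}" "\<lambda>_. {}"] by (simp add: disjoint_family_on_def)

lemma glue_box_empty:
  assumes "S = {} \<or> T = {} \<or> U = {}"
  shows "glue_box S T U = 0"
proof -
  have "AE x in glue_base. indicator S x * cond_density A T x * cond_density B U x = 0"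
    using AE_cond_density_A_empty AE_cond_density_B_empty by eventually_elim (use assms in auto)
  then have "glue_box S T U = (\<integral>\<^sup>+x. 0 \<partial>glue_base)" unfolding glue_box_def by (rule nn_integral_cong_AE)
  then show ?thesis by simp
qed

lemma glue_box_fun_Times:
  assumes "S \<in> sets borel" "T \<in> sets borel" "U \<in> sets borel"
  shows "glue_box_fun (S \<times> (T \<times> U)) = glue_box S T U"
proof (cases "S = {} \<or> T = {} \<or> U = {}")
  case True
  then have "S \<times> (T \<times> U) = {}" by auto
  then show ?thesis using True glue_box_empty[of "{}" "{}" "{}"] glue_box_empty[OF True] by (simp add: glue_box_fun_def)
next
  case False
  then show ?thesis by (simp add: glue_box_fun_def fst_image_times snd_image_times)
qed

lemma glue_box_eq_A:
  assumes S: "S \<in> sets borel" and T: "T \<in> sets borel"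
  shows "glue_box S T UNIV = emeasure A (S \<times> T)"
proof -
  have "glue_box S T UNIV = (\<integral>\<^sup>+x. cond_density A T x * indicator S x \<partial>glue_base)"
    unfolding glue_box_def using AE_cond_density_B_UNIV by (intro nn_integral_cong_AE) (auto simp: mult.commute)
  also have "\<dots> = emeasure A (S \<times> T)" unfolding glue_base_def by (rule nn_integral_cond_density[OF fA sA T S])
  finally show ?thesis .
qed

lemma glue_box_eq_B:
  assumes S: "S \<in> sets borel" and U: "U \<in> sets borel"
  shows "glue_box S UNIV U = emeasure B (S \<times> U)"
proof -
  have "glue_box S UNIV U = (\<integral>\<^sup>+x. cond_density B U x * indicator S x \<partial>glue_base)"
    unfolding glue_box_def using AE_cond_density_A_UNIV by (intro nn_integral_cong_AE) (auto simp: mult.commute)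
  also have "\<dots> = emeasure B (S \<times> U)" unfolding glue_base_eq_distr_B by (rule nn_integral_cond_density[OF fB sB U S])
  finally show ?thesis .
qed

lemma glue_box_eq_glue_base:
  assumes S: "S \<in> sets borel"
  shows "glue_box S UNIV UNIV = emeasure glue_base S"
proof -
  have "glue_box S UNIV UNIV = emeasure A (S \<times> UNIV)" by (rule glue_box_eq_A[OF S]) simp
  also have "\<dots> = emeasure glue_base S"
    unfolding glue_base_def using emeasure_distr[OF measurable_fst_borel[OF sA] S] space_eq_UNIV_if_sets_borel[OF sA]
    by (simp add: vimage_fst)
  finally show ?thesis .
qed

lemma volume_glue_box_fun: "volume borel_boxes glue_box_fun"
proof (rule volumeI)
  show "glue_box_fun {} = 0" unfolding glue_box_fun_def by (rule glue_box_empty) simp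
  show "0 \<le> glue_box_fun a" for a by simp
  fix C :: "('a \<times> 'b \<times> 'c) set set"
  assume C: "C \<subseteq> borel_boxes" "disjoint C" "finite C" "\<Union>C \<in> borel_boxes"
  define S where "S c = fst ` c" for c :: "('a \<times> 'b \<times> 'c) set"
  define T where "T c = fst ` snd ` c" for c :: "('a \<times> 'b \<times> 'c) set"
  define U where "U c = snd ` snd ` c" for c :: "('a \<times> 'b \<times> 'c) set"
  have dec: "c = S c \<times> (T c \<times> U c)" if "c \<in> borel_boxes" for c
    unfolding S_def T_def U_def by (rule borel_boxes_decomp(1)[OF that])
  have ind: "indicator c (x, y, z) = indicator (S c) x * indicator (T c) y * (indicator (U c) z :: ennreal)"
    if "c \<in> borel_boxes" for c x y z
    by (subst dec[OF that]) (simp add: indicator_times mult.assoc)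
  have AE: "AE x in glue_base. (\<Sum>c\<in>C. indicator (S c) x * cond_density A (T c) x * cond_density B (U c) x)
      = (\<Sum>c\<in>{\<Union>C}. indicator (S c) x * cond_density A (T c) x * cond_density B (U c) x)"
  proof (rule AE_sum_indicator_times_cong[where F="cond_density A" and Gf="cond_density B"])
    show "\<And>(J :: 'b set set set) Ta. finite J \<Longrightarrow> (\<And>j. j \<in> J \<Longrightarrow> Ta j \<in> sets borel) \<Longrightarrow>
      disjoint_family_on Ta J \<Longrightarrow> AE x in glue_base. cond_density A (\<Union>j\<in>J. Ta j) x = (\<Sum>j\<in>J. cond_density A (Ta j) x)"
      by (rule AE_cond_density_A_UN)
    show "\<And>(J :: 'c set set set) Ua. finite J \<Longrightarrow> (\<And>j. j \<in> J \<Longrightarrow> Ua j \<in> sets borel) \<Longrightarrow>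
      disjoint_family_on Ua J \<Longrightarrow> AE x in glue_base. cond_density B (\<Union>j\<in>J. Ua j) x = (\<Sum>j\<in>J. cond_density B (Ua j) x)"
      by (rule AE_cond_density_B_UN)
    show "finite C" "finite {\<Union>C}" using C by auto
    show "i \<in> C \<Longrightarrow> T i \<in> sets borel \<and> U i \<in> sets borel" for i
      using C borel_boxes_decomp(3,4) unfolding T_def U_def by blast
    show "j \<in> {\<Union>C} \<Longrightarrow> T j \<in> sets borel \<and> U j \<in> sets borel" for j
      using C borel_boxes_decomp(3,4) unfolding T_def U_def by blast
    fix x y z
    have "(\<Sum>c\<in>C. indicator (S c) x * indicator (T c) y * indicator (U c) z) = (\<Sum>c\<in>C. indicator c (x, y, z) :: ennreal)"
      using C ind by (intro sum.cong refl) auto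
    also have "\<dots> = indicator (\<Union>C) (x, y, z)"
    proof -
      have "disjoint_family_on (\<lambda>c. c) C" using C(2) unfolding disjoint_family_on_def disjoint_def disjnt_def by auto
      then have "indicator (\<Union>c\<in>C. c) (x, y, z) = (\<Sum>c\<in>C. indicator c (x, y, z) :: ennreal)"
        by (rule indicator_UN_disjoint[OF C(3)])
      then show ?thesis by simp
    qed
    also have "\<dots> = (\<Sum>c\<in>{\<Union>C}. indicator (S c) x * indicator (T c) y * indicator (U c) z)"
    proof -
      have sing: "\<And>h :: _ \<Rightarrow> ennreal. (\<Sum>c\<in>{\<Union>C}. h c) = h (\<Union>C)" by simp
      show ?thesis unfolding sing by (rule ind[OF C(4)])
    qed
    finally show "(\<Sum>c\<in>C. indicator (S c) x * indicator (T c) y * indicator (U c) z)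
      = (\<Sum>c\<in>{\<Union>C}. indicator (S c) x * indicator (T c) y * indicator (U c) z :: ennreal)" .
  qed
  have Sm: "S c \<in> sets borel" if "c \<in> borel_boxes" for c using borel_boxes_decomp(2)[OF that] unfolding S_def .
  have "glue_box_fun (\<Union>C) = (\<integral>\<^sup>+x. (\<Sum>c\<in>{\<Union>C}. indicator (S c) x * cond_density A (T c) x * cond_density B (U c) x) \<partial>glue_base)"
    unfolding glue_box_fun_def glue_box_def S_def T_def U_def by simp
  also have "\<dots> = (\<integral>\<^sup>+x. (\<Sum>c\<in>C. indicator (S c) x * cond_density A (T c) x * cond_density B (U c) x) \<partial>glue_base)"
    using AE by (intro nn_integral_cong_AE) auto
  also have "\<dots> = (\<Sum>c\<in>C. \<integral>\<^sup>+x. indicator (S c) x * cond_density A (T c) x * cond_density B (U c) x \<partial>glue_base)"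
  proof (rule nn_integral_sum)
    fix c assume "c \<in> C"
    then have "S c \<in> sets glue_base" using Sm C by auto
    then show "(\<lambda>x. indicator (S c) x * cond_density A (T c) x * cond_density B (U c) x) \<in> borel_measurable glue_base"
      by (intro borel_measurable_times_ennreal borel_measurable_indicator measurable_cond_density_A measurable_cond_density_B)
  qed
  also have "\<dots> = (\<Sum>c\<in>C. glue_box_fun c)" unfolding glue_box_fun_def glue_box_def S_def T_def U_def by simp
  finally show "glue_box_fun (\<Union>C) = (\<Sum>c\<in>C. glue_box_fun c)" .
qed

definition "box_ring = semiring_of_sets.generated_ring (borel_boxes :: ('a \<times> 'b \<times> 'c) set set)"

lemma ring_of_sets_box_ring: "ring_of_sets UNIV box_ring"
  unfolding box_ring_def by (rule semiring_of_sets.generating_ring[OF semiring_of_sets_borel_boxes])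

lemma borel_boxes_in_box_ring: "R \<in> borel_boxes \<Longrightarrow> R \<in> box_ring"
  unfolding box_ring_def by (rule semiring_of_sets.generated_ringI_Basic[OF semiring_of_sets_borel_boxes])

lemma box_ring_elim: "E \<in> box_ring \<Longrightarrow> \<exists>C. finite C \<and> C \<subseteq> borel_boxes \<and> E = \<Union>C"
  unfolding box_ring_def semiring_of_sets.generated_ring_def[OF semiring_of_sets_borel_boxes] by blast

lemma box_ring_Un: "a \<in> box_ring \<Longrightarrow> b \<in> box_ring \<Longrightarrow> a \<union> b \<in> box_ring"
  using ring_of_sets_box_ring by (simp add: ring_of_sets_iff)
lemma box_ring_Diff: "a \<in> box_ring \<Longrightarrow> b \<in> box_ring \<Longrightarrow> a - b \<in> box_ring"
  using ring_of_sets_box_ring by (simp add: ring_of_sets_iff)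
lemma box_ring_empty: "{} \<in> box_ring"
  using ring_of_sets_box_ring by (simp add: ring_of_sets_iff)
lemma box_ring_Int: "a \<in> box_ring \<Longrightarrow> b \<in> box_ring \<Longrightarrow> a \<inter> b \<in> box_ring"
proof -
  assume "a \<in> box_ring" "b \<in> box_ring"
  then have "a - (a - b) \<in> box_ring" by (intro box_ring_Diff)
  moreover have "a - (a - b) = a \<inter> b" by auto
  ultimately show ?thesis by simp
qed

lemma UNIV_in_borel_boxes: "(UNIV :: ('a \<times> 'b \<times> 'c) set) \<in> borel_boxes"
  using borel_boxesI[of UNIV UNIV UNIV] by simp

lemma sigma_sets_box_ring: "sigma_sets UNIV box_ring = sigma_sets UNIV (borel_boxes :: ('a \<times> 'b \<times> 'c) set set)"
  unfolding box_ring_def by (rule semiring_of_sets.sigma_sets_generated_ring_eq[OF semiring_of_sets_borel_boxes])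

definition "glue_content = (SOME m. volume box_ring m \<and> (\<forall>a\<in>borel_boxes. m a = glue_box_fun a))"

lemma glue_content_props: "volume box_ring glue_content \<and> (\<forall>a\<in>borel_boxes. glue_content a = glue_box_fun a)"
proof -
  have "\<exists>m. volume box_ring m \<and> (\<forall>a\<in>borel_boxes. m a = glue_box_fun a)"
    unfolding box_ring_def by (rule semiring_of_sets.extend_volume[OF semiring_of_sets_borel_boxes volume_glue_box_fun])
  then show ?thesis unfolding glue_content_def by (rule someI_ex)
qed

lemma volume_glue_content: "volume box_ring glue_content" using glue_content_props by blast

lemma glue_content_Times: "S \<in> sets borel \<Longrightarrow> T \<in> sets borel \<Longrightarrow> U \<in> sets borel \<Longrightarrow> glue_content (S \<times> (T \<times> U)) = glue_box S T U"
  using glue_content_props borel_boxesI glue_box_fun_Times by metis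

lemma glue_content_empty: "glue_content {} = 0" using volume_empty[OF volume_glue_content] .

lemma positive_glue_content: "positive box_ring glue_content" unfolding positive_def using glue_content_empty by simp

lemma additive_glue_content: "additive box_ring glue_content"
  unfolding additive_def
proof safe
  fix x y assume x: "x \<in> box_ring" and y: "y \<in> box_ring" and d: "x \<inter> y = {}"
  show "glue_content (x \<union> y) = glue_content x + glue_content y"
  proof (cases "x = y")
    case True
    then have "x = {}" using d by simp
    then show ?thesis using True glue_content_empty by simp
  next
    case False
    have "glue_content (\<Union>{x, y}) = (\<Sum>c\<in>{x, y}. glue_content c)"
    proof -
      have V: "\<And>C. C \<subseteq> box_ring \<Longrightarrow> disjoint C \<Longrightarrow> finite C \<Longrightarrow> \<Union>C \<in> box_ring \<Longrightarrow> glue_content (\<Union>C) = (\<Sum>c\<in>C. glue_content c)"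
        using volume_glue_content unfolding volume_def by blast
      have "disjoint {x, y}" using d unfolding disjoint_def disjnt_def pairwise_def by auto
      moreover have "\<Union>{x, y} \<in> box_ring" using box_ring_Un[OF x y] by simp
      ultimately show ?thesis using x y by (intro V) auto
    qed
    then show ?thesis using False by simp
  qed
qed

lemma glue_content_mono: "x \<in> box_ring \<Longrightarrow> y \<in> box_ring \<Longrightarrow> x \<subseteq> y \<Longrightarrow> glue_content x \<le> glue_content y"
  using ring_of_sets.additive_increasing[OF ring_of_sets_box_ring positive_glue_content additive_glue_content] unfolding increasing_def by blast

lemma glue_content_subadditive: "x \<in> box_ring \<Longrightarrow> y \<in> box_ring \<Longrightarrow> glue_content (x \<union> y) \<le> glue_content x + glue_content y"
proof -
  assume x: "x \<in> box_ring" and y: "y \<in> box_ring"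
  have "x \<union> y = x \<union> (y - x)" by auto
  moreover have "glue_content (x \<union> (y - x)) = glue_content x + glue_content (y - x)"
    by (rule additiveD[OF additive_glue_content _ x box_ring_Diff[OF y x]]) auto
  ultimately have "glue_content (x \<union> y) = glue_content x + glue_content (y - x)" by simp
  also have "\<dots> \<le> glue_content x + glue_content y" using glue_content_mono[OF box_ring_Diff[OF y x] y] by (intro add_left_mono) auto
  finally show ?thesis .
qed

lemma glue_content_UNIV: "glue_content UNIV = emeasure glue_base UNIV"
  using glue_content_Times[of UNIV UNIV UNIV] glue_box_eq_glue_base[of UNIV] by simp

lemma glue_content_finite: "E \<in> box_ring \<Longrightarrow> glue_content E \<noteq> \<infinity>"
proof -
  assume E: "E \<in> box_ring"
  have "glue_content E \<le> glue_content UNIV" using glue_content_mono[OF E borel_boxes_in_box_ring[OF UNIV_in_borel_boxes]] by simp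
  also have "\<dots> < \<infinity>" using glue_content_UNIV finite_measure.emeasure_finite[OF finite_measure_glue_base, of UNIV]
    by (simp add: top.not_eq_extremum)
  finally show ?thesis by simp
qed

text \<open>The content of boxes is \<open>\<sigma>\<close>-additive because it is inner regular with respect to compact
  boxes, the marginals being finite Borel measures on Polish spaces.\<close>

lemma glue_content_inner_compact_box:
  assumes S: "S \<in> sets borel" and T: "T \<in> sets borel" and U: "U \<in> sets borel" and e: "e > 0"
  shows "\<exists>K\<in>box_ring. K \<subseteq> S \<times> (T \<times> U) \<and> compact K \<and> glue_content (S \<times> (T \<times> U) - K) \<le> ennreal e"
proof -
  have e3: "e / 3 > 0" using e by simp
  obtain K1 where K1: "K1 \<subseteq> S" "compact K1" "emeasure glue_base (S - K1) \<le> ennreal (e / 3)"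
    using compact_subset_measure_approx[OF finite_measure_glue_base sets_glue_base S e3] by blast
  have fAY: "finite_measure (distr A borel (snd :: 'a \<times> 'b \<Rightarrow> 'b))"
    by (rule finite_measure.finite_measure_distr[OF fA measurable_snd_borel[OF sA]])
  have fBZ: "finite_measure (distr B borel (snd :: 'a \<times> 'c \<Rightarrow> 'c))"
    by (rule finite_measure.finite_measure_distr[OF fB measurable_snd_borel[OF sB]])
  obtain K2 where K2: "K2 \<subseteq> T" "compact K2" "emeasure (distr A borel snd) (T - K2) \<le> ennreal (e / 3)"
    using compact_subset_measure_approx[OF fAY _ T e3] by auto
  obtain K3 where K3: "K3 \<subseteq> U" "compact K3" "emeasure (distr B borel snd) (U - K3) \<le> ennreal (e / 3)"
    using compact_subset_measure_approx[OF fBZ _ U e3] by auto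
  have K1m: "K1 \<in> sets borel" and K2m: "K2 \<in> sets borel" and K3m: "K3 \<in> sets borel"
    using K1 K2 K3 by (simp_all add: borel_compact)
  define K where "K = K1 \<times> (K2 \<times> K3)"
  have KR: "K \<in> box_ring" unfolding K_def by (intro borel_boxes_in_box_ring borel_boxesI K1m K2m K3m)
  have Kc: "compact K" unfolding K_def using K1 K2 K3 by (intro compact_Times) auto
  have Ksub: "K \<subseteq> S \<times> (T \<times> U)" unfolding K_def using K1 K2 K3 by auto
  have SR: "S \<times> (T \<times> U) \<in> box_ring" by (intro borel_boxes_in_box_ring borel_boxesI S T U)
  define W1 where "W1 = (S - K1) \<times> ((UNIV :: 'b set) \<times> (UNIV :: 'c set))"
  define W2 where "W2 = (UNIV :: 'a set) \<times> ((T - K2) \<times> (UNIV :: 'c set))"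
  define W3 where "W3 = (UNIV :: 'a set) \<times> ((UNIV :: 'b set) \<times> (U - K3))"
  have W1R: "W1 \<in> box_ring" unfolding W1_def using S K1m by (intro borel_boxes_in_box_ring borel_boxesI) auto
  have W2R: "W2 \<in> box_ring" unfolding W2_def using T K2m by (intro borel_boxes_in_box_ring borel_boxesI) auto
  have W3R: "W3 \<in> box_ring" unfolding W3_def using U K3m by (intro borel_boxes_in_box_ring borel_boxesI) auto
  have "glue_content (S \<times> (T \<times> U) - K) \<le> glue_content (W1 \<union> W2 \<union> W3)"
    using box_ring_Diff[OF SR KR] box_ring_Un[OF box_ring_Un[OF W1R W2R] W3R]
    by (rule glue_content_mono) (auto simp: K_def W1_def W2_def W3_def)
  also have "\<dots> \<le> glue_content (W1 \<union> W2) + glue_content W3" by (rule glue_content_subadditive[OF box_ring_Un[OF W1R W2R] W3R])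
  also have "\<dots> \<le> glue_content W1 + glue_content W2 + glue_content W3" using glue_content_subadditive[OF W1R W2R] by (intro add_right_mono)
  also have "glue_content W1 = emeasure glue_base (S - K1)"
    unfolding W1_def using S K1m glue_content_Times[of "S - K1" UNIV UNIV] glue_box_eq_glue_base[of "S - K1"] by (simp add: sets.Diff)
  also have "glue_content W2 = emeasure A (UNIV \<times> (T - K2))"
    unfolding W2_def using T K2m by (simp add: glue_content_Times glue_box_eq_A sets.Diff)
  also have "\<dots> = emeasure (distr A borel snd) (T - K2)"
    using emeasure_distr[OF measurable_snd_borel[OF sA], of "T - K2"] T K2m space_eq_UNIV_if_sets_borel[OF sA]
    by (simp add: vimage_snd sets.Diff)
  also have "glue_content W3 = emeasure B (UNIV \<times> (U - K3))"
    unfolding W3_def using U K3m by (simp add: glue_content_Times glue_box_eq_B sets.Diff)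
  also have "\<dots> = emeasure (distr B borel snd) (U - K3)"
    using emeasure_distr[OF measurable_snd_borel[OF sB], of "U - K3"] U K3m space_eq_UNIV_if_sets_borel[OF sB]
    by (simp add: vimage_snd sets.Diff)
  also have "emeasure glue_base (S - K1) + emeasure (distr A borel snd) (T - K2) + emeasure (distr B borel snd) (U - K3)
      \<le> ennreal (e / 3) + ennreal (e / 3) + ennreal (e / 3)"
    using K1(3) K2(3) K3(3) by (intro add_mono) auto
  also have "\<dots> = ennreal e" using e by (simp add: ennreal_plus[symmetric] del: ennreal_plus)
  finally show ?thesis using KR Ksub Kc by blast
qed

lemma glue_content_inner_compact:
  assumes E: "E \<in> box_ring" and e: "e > 0"
  shows "\<exists>K\<in>box_ring. K \<subseteq> E \<and> compact K \<and> glue_content (E - K) \<le> ennreal e"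
proof -
  obtain C where C: "finite C" "C \<subseteq> borel_boxes" "E = \<Union>C" using box_ring_elim[OF E] by blast
  have "\<forall>e>0. \<exists>K\<in>box_ring. K \<subseteq> \<Union>C \<and> compact K \<and> glue_content (\<Union>C - K) \<le> ennreal e"
    using C(1,2)
  proof (induction C rule: finite_induct)
    case empty
    then show ?case using box_ring_empty glue_content_empty by auto
  next
    case (insert c C)
    show ?case
    proof (intro allI impI)
      fix e :: real assume e: "e > 0"
      obtain S T U where c: "c = S \<times> (T \<times> U)" "S \<in> sets borel" "T \<in> sets borel" "U \<in> sets borel"
        using insert(4) unfolding borel_boxes_def by blast
      obtain K1 where K1: "K1 \<in> box_ring" "K1 \<subseteq> c" "compact K1" "glue_content (c - K1) \<le> ennreal (e / 2)"
        using glue_content_inner_compact_box[OF c(2-4), of "e / 2"] e c(1) by auto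
      obtain K2 where K2: "K2 \<in> box_ring" "K2 \<subseteq> \<Union>C" "compact K2" "glue_content (\<Union>C - K2) \<le> ennreal (e / 2)"
        using insert(3,4) e by (metis half_gt_zero insert_subset)
      have cR: "c \<in> box_ring" using insert(4) borel_boxes_in_box_ring by auto
      have CR: "\<Union>C \<in> box_ring" using insert(1,4) ring_of_sets.finite_Union[OF ring_of_sets_box_ring] borel_boxes_in_box_ring by auto
      have "glue_content (c \<union> \<Union>C - (K1 \<union> K2)) \<le> glue_content ((c - K1) \<union> (\<Union>C - K2))"
        using box_ring_Diff[OF box_ring_Un[OF cR CR] box_ring_Un[OF K1(1) K2(1)]] box_ring_Un[OF box_ring_Diff[OF cR K1(1)] box_ring_Diff[OF CR K2(1)]]
        by (rule glue_content_mono) auto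
      also have "\<dots> \<le> glue_content (c - K1) + glue_content (\<Union>C - K2)"
        by (rule glue_content_subadditive[OF box_ring_Diff[OF cR K1(1)] box_ring_Diff[OF CR K2(1)]])
      also have "\<dots> \<le> ennreal (e / 2) + ennreal (e / 2)" using K1(4) K2(4) by (intro add_mono)
      also have "\<dots> = ennreal e" using e by (simp add: ennreal_plus[symmetric] del: ennreal_plus)
      finally have "glue_content (c \<union> \<Union>C - (K1 \<union> K2)) \<le> ennreal e" .
      then show "\<exists>K\<in>box_ring. K \<subseteq> \<Union>(insert c C) \<and> compact K \<and> glue_content (\<Union>(insert c C) - K) \<le> ennreal e"
        using K1 K2 by (intro bexI[of _ "K1 \<union> K2"] box_ring_Un) (auto intro: compact_Un)
    qed
  qed
  then show ?thesis using C(3) e by blast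
qed

lemma glue_content_nested_compact:
  assumes E: "range E \<subseteq> box_ring" and dec: "decseq E" and e: "e > 0"
  obtains L where "\<And>n. L n \<in> box_ring" "\<And>n. compact (L n)" "\<And>n. L n \<subseteq> E n" "decseq L"
    "\<And>n. glue_content (E n - L n) \<le> ennreal e"
proof -
  have ER: "E n \<in> box_ring" for n using E by auto
  define eps where "eps n = e / 2 * (1/2) ^ n" for n :: nat
  have epos: "eps n > 0" for n unfolding eps_def using e by simp
  have "\<forall>n. \<exists>K. K \<in> box_ring \<and> K \<subseteq> E n \<and> compact K \<and> glue_content (E n - K) \<le> ennreal (eps n)"
    using glue_content_inner_compact[OF ER epos] by blast
  then obtain K where K: "\<And>n. K n \<in> box_ring \<and> K n \<subseteq> E n \<and> compact (K n) \<and> glue_content (E n - K n) \<le> ennreal (eps n)"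
    by metis
  define L where "L n = (\<Inter>i\<in>{..n}. K i)" for n
  have L: "L n \<in> box_ring \<and> compact (L n)" for n
  proof (induction n)
    case 0
    then show ?case using K[of 0] by (simp add: L_def)
  next
    case (Suc n)
    have "L (Suc n) = L n \<inter> K (Suc n)" unfolding L_def by (auto simp: atMost_Suc)
    then show ?case using Suc K[of "Suc n"] by (auto intro: box_ring_Int compact_Int)
  qed
  have "decseq L" unfolding L_def decseq_def by auto
  moreover have "L n \<subseteq> E n" for n unfolding L_def using K[of n] by auto
  moreover have "glue_content (E n - L n) \<le> ennreal e" for n
  proof -
    have "E n - L n \<subseteq> (\<Union>i\<in>{..n}. E i - K i)"
      unfolding L_def using dec by (auto simp: decseq_def)
    then have "glue_content (E n - L n) \<le> glue_content (\<Union>i\<in>{..n}. E i - K i)"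
      using ER K L by (intro glue_content_mono box_ring_Diff ring_of_sets.finite_UN[OF ring_of_sets_box_ring]) auto
    also have "\<dots> \<le> (\<Sum>i\<in>{..n}. glue_content (E i - K i))"
      using ER K by (intro ring_of_sets.subadditive[OF ring_of_sets_box_ring positive_glue_content additive_glue_content])
        (auto intro: box_ring_Diff)
    also have "\<dots> \<le> (\<Sum>i\<in>{..n}. ennreal (eps i))" using K by (intro sum_mono) auto
    also have "\<dots> = ennreal (\<Sum>i\<in>{..n}. eps i)" using epos by (intro sum_ennreal) (simp add: less_imp_le)
    also have "(\<Sum>i\<in>{..n}. eps i) = e / 2 * (2 - (1/2) ^ n)"
      unfolding eps_def sum_distrib_left[symmetric] sum_power_half ..
    also have "\<dots> \<le> e" using e by (simp add: field_simps)
    finally show ?thesis by (simp add: ennreal_leI)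
  qed
  ultimately show ?thesis using L by (intro that) auto
qed

lemma glue_content_continuous_empty:
  assumes E: "range E \<subseteq> box_ring" and dec: "decseq E" and emp: "(\<Inter>i. E i) = {}"
  shows "(\<lambda>i. glue_content (E i)) \<longlonglongrightarrow> 0"
proof -
  have ER: "E n \<in> box_ring" for n using E by auto
  have "decseq (\<lambda>i. glue_content (E i))"
    unfolding decseq_def using dec ER by (auto intro!: glue_content_mono simp: decseq_def)
  then have lim: "(\<lambda>i. glue_content (E i)) \<longlonglongrightarrow> (INF i. glue_content (E i))"
    by (rule LIMSEQ_INF)
  have "(INF i. glue_content (E i)) = 0"
  proof (rule ccontr)
    assume nz: "(INF i. glue_content (E i)) \<noteq> 0"
    have "(INF i. glue_content (E i)) \<le> glue_content (E 0)" by (rule INF_lower) simp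
    then have "(INF i. glue_content (E i)) \<noteq> \<infinity>"
      using glue_content_finite[OF ER[of 0]] by (auto simp: top_unique)
    then obtain d where d: "(INF i. glue_content (E i)) = ennreal d" "d \<ge> 0"
      by (cases "(INF i. glue_content (E i))") auto
    then have dpos: "d > 0" using nz by (cases "d = 0") auto
    have ge: "ennreal d \<le> glue_content (E n)" for n using d(1) by (metis INF_lower UNIV_I)
    obtain L where L: "\<And>n. L n \<in> box_ring" "\<And>n. compact (L n)" "\<And>n. L n \<subseteq> E n" "decseq L"
      and small: "\<And>n. glue_content (E n - L n) \<le> ennreal (d / 2)"
      by (rule glue_content_nested_compact[OF E dec, of "d / 2"]) (use dpos in auto)
    have "L n \<noteq> {}" for n
    proof
      assume "L n = {}"
      then have "glue_content (E n) = glue_content (E n - L n)" by simp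
      also have "\<dots> < ennreal d" using small[of n] dpos by (simp add: ennreal_less_iff order_le_less_trans)
      finally show False using ge[of n] by simp
    qed
    then have "(\<Inter>n. L n) \<noteq> {}"
      using L(2,4) by (intro Inter_nested_compact_nonempty) (auto simp: decseq_def)
    moreover have "(\<Inter>n. L n) \<subseteq> (\<Inter>n. E n)" using L(3) by auto
    ultimately show False using emp by auto
  qed
  then show ?thesis using lim by simp
qed

definition "glue_extension = (SOME m. (\<forall>s\<in>box_ring. m s = glue_content s) \<and> measure_space UNIV (sigma_sets UNIV box_ring) m)"

lemma glue_extension_props: "(\<forall>s\<in>box_ring. glue_extension s = glue_content s) \<and> measure_space UNIV (sigma_sets UNIV box_ring) glue_extension"
proof -
  have "\<exists>m. (\<forall>s\<in>box_ring. m s = glue_content s) \<and> measure_space UNIV (sigma_sets UNIV box_ring) m"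
    by (rule ring_of_sets.caratheodory_empty_continuous[OF ring_of_sets_box_ring positive_glue_content additive_glue_content glue_content_finite glue_content_continuous_empty])
  then show ?thesis unfolding glue_extension_def by (rule someI_ex)
qed

definition "glued_measure = measure_of UNIV (sigma_sets UNIV (borel_boxes :: ('a \<times> 'b \<times> 'c) set set)) glue_extension"

lemma sets_glued_measure: "sets glued_measure = sets borel"
  unfolding glued_measure_def sets_borel_eq_sigma_borel_boxes by (simp add: sets_measure_of_conv sigma_sets_sigma_sets_eq)

lemma emeasure_glued_measure: "X \<in> sigma_sets UNIV borel_boxes \<Longrightarrow> emeasure glued_measure X = glue_extension X"
  unfolding glued_measure_def
proof (rule emeasure_measure_of_sigma)
  have ms: "measure_space UNIV (sigma_sets UNIV borel_boxes) glue_extension" using glue_extension_props sigma_sets_box_ring by simp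
  then show "sigma_algebra UNIV (sigma_sets UNIV (borel_boxes :: ('a \<times> 'b \<times> 'c) set set))"
    "positive (sigma_sets UNIV borel_boxes) glue_extension" "countably_additive (sigma_sets UNIV borel_boxes) glue_extension"
    unfolding measure_space_def by auto
qed

lemma emeasure_glued_measure_Times:
  assumes "S \<in> sets borel" "T \<in> sets borel" "U \<in> sets borel"
  shows "emeasure glued_measure (S \<times> (T \<times> U)) = glue_box S T U"
proof -
  have R: "S \<times> (T \<times> U) \<in> borel_boxes" using assms by (rule borel_boxesI)
  then have "emeasure glued_measure (S \<times> (T \<times> U)) = glue_extension (S \<times> (T \<times> U))" by (intro emeasure_glued_measure) auto
  also have "\<dots> = glue_content (S \<times> (T \<times> U))" using glue_extension_props borel_boxes_in_box_ring[OF R] by simp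
  also have "\<dots> = glue_box S T U" using glue_content_Times[OF assms] .
  finally show ?thesis .
qed

lemma finite_measure_glued_measure: "finite_measure glued_measure"
proof (rule finite_measureI)
  have sp: "space glued_measure = UNIV" using sets_glued_measure by (rule space_eq_UNIV_if_sets_borel)
  have "emeasure glued_measure (UNIV \<times> (UNIV \<times> UNIV)) = glue_box UNIV UNIV UNIV" by (rule emeasure_glued_measure_Times) auto
  also have "\<dots> = emeasure glue_base UNIV" by (rule glue_box_eq_glue_base) simp
  finally show "emeasure glued_measure (space glued_measure) \<noteq> \<infinity>"
    using finite_measure.emeasure_finite[OF finite_measure_glue_base, of UNIV] sp by simp
qed

lemma glued_measure_marginals:
  "\<exists>G :: ('a \<times> 'b \<times> 'c) measure. finite_measure G \<and> sets G = sets borel \<and>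
     distr G borel (\<lambda>p. (fst p, fst (snd p))) = A \<and> distr G borel (\<lambda>p. (fst p, snd (snd p))) = B"
proof (intro exI conjI)
  show "finite_measure glued_measure" by (rule finite_measure_glued_measure)
  show "sets glued_measure = sets borel" by (rule sets_glued_measure)
  have c1: "(\<lambda>p::'a \<times> 'b \<times> 'c. (fst p, fst (snd p))) \<in> measurable glued_measure borel"
    using sets_glued_measure by (intro measurable_borel_if_continuous continuous_intros)
  have c2: "(\<lambda>p::'a \<times> 'b \<times> 'c. (fst p, snd (snd p))) \<in> measurable glued_measure borel"
    using sets_glued_measure by (intro measurable_borel_if_continuous continuous_intros)
  have spG: "space glued_measure = UNIV" using sets_glued_measure by (rule space_eq_UNIV_if_sets_borel)
  show "distr glued_measure borel (\<lambda>p. (fst p, fst (snd p))) = A"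
  proof (rule measure_eq_if_eq_on_Times)
    show "finite_measure (distr glued_measure borel (\<lambda>p. (fst p, fst (snd p))))"
      by (rule finite_measure.finite_measure_distr[OF finite_measure_glued_measure c1])
    fix S :: "'a set" and T :: "'b set" assume S: "S \<in> sets borel" and T: "T \<in> sets borel"
    have "emeasure (distr glued_measure borel (\<lambda>p. (fst p, fst (snd p)))) (S \<times> T)
        = emeasure glued_measure ((\<lambda>p. (fst p, fst (snd p))) -` (S \<times> T) \<inter> space glued_measure)"
      by (rule emeasure_distr[OF c1 Times_in_sets_borel[OF S T]])
    also have "(\<lambda>p. (fst p, fst (snd p))) -` (S \<times> T) \<inter> space glued_measure = S \<times> (T \<times> UNIV)" using spG by auto
    also have "emeasure glued_measure (S \<times> (T \<times> UNIV)) = glue_box S T UNIV" using S T by (intro emeasure_glued_measure_Times) auto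
    also have "\<dots> = emeasure A (S \<times> T)" by (rule glue_box_eq_A[OF S T])
    finally show "emeasure (distr glued_measure borel (\<lambda>p. (fst p, fst (snd p)))) (S \<times> T) = emeasure A (S \<times> T)" .
  qed (simp_all add: sA)
  show "distr glued_measure borel (\<lambda>p. (fst p, snd (snd p))) = B"
  proof (rule measure_eq_if_eq_on_Times)
    show "finite_measure (distr glued_measure borel (\<lambda>p. (fst p, snd (snd p))))"
      by (rule finite_measure.finite_measure_distr[OF finite_measure_glued_measure c2])
    fix S :: "'a set" and U :: "'c set" assume S: "S \<in> sets borel" and U: "U \<in> sets borel"
    have "emeasure (distr glued_measure borel (\<lambda>p. (fst p, snd (snd p)))) (S \<times> U)
        = emeasure glued_measure ((\<lambda>p. (fst p, snd (snd p))) -` (S \<times> U) \<inter> space glued_measure)"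
      by (rule emeasure_distr[OF c2 Times_in_sets_borel[OF S U]])
    also have "(\<lambda>p. (fst p, snd (snd p))) -` (S \<times> U) \<inter> space glued_measure = S \<times> (UNIV \<times> U)" using spG by auto
    also have "emeasure glued_measure (S \<times> (UNIV \<times> U)) = glue_box S UNIV U" using S U by (intro emeasure_glued_measure_Times) auto
    also have "\<dots> = emeasure B (S \<times> U)" by (rule glue_box_eq_B[OF S U])
    finally show "emeasure (distr glued_measure borel (\<lambda>p. (fst p, snd (snd p)))) (S \<times> U) = emeasure B (S \<times> U)" .
  qed (simp_all add: sB)
qed

end

instance prod :: (polish_space, polish_space) polish_space ..

lemma gluing:
  fixes A :: "('a::polish_space \<times> 'b::polish_space) measure" and B :: "('a \<times> 'c::polish_space) measure"
  assumes "finite_measure A" "finite_measure B" "sets A = sets borel" "sets B = sets borel"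
    "distr A borel fst = distr B borel fst"
  obtains G :: "('a \<times> 'b \<times> 'c) measure" where "finite_measure G" "sets G = sets borel"
    "distr G borel (\<lambda>p. (fst p, fst (snd p))) = A" "distr G borel (\<lambda>p. (fst p, snd (snd p))) = B"
  using glued_measure_marginals[OF assms] by blast

lemma common_part_decomposition_borel:
  fixes M N :: "'a::topological_space measure"
  assumes fM: "finite_measure M" and fN: "finite_measure N"
    and sM: "sets M = sets borel" and sN: "sets N = sets borel"
    and mass: "emeasure M UNIV = emeasure N UNIV"
  obtains m M' N' G where "finite_measure m" "finite_measure M'" "finite_measure N'"
    "sets m = sets borel" "sets M' = sets borel" "sets N' = sets borel"
    "M = add_measure m M'" "N = add_measure m N'"
    "G \<in> sets borel" "emeasure M' (UNIV - G) = 0" "emeasure N' G = 0"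
    "emeasure M' UNIV = emeasure N' UNIV"
proof -
  obtain m M' N' G where fin: "finite_measure m" "finite_measure M'" "finite_measure N'"
    and sets: "sets m = sets M" "sets M' = sets m" "sets N' = sets m"
    and eq: "M = add_measure m M'" "N = add_measure m N'"
    and G: "G \<in> sets m" "emeasure M' (space m - G) = 0" "emeasure N' G = 0"
    using common_part_decomposition[OF fM fN] sM sN by metis
  have sm: "sets m = sets borel" using sets(1) sM by simp
  have space: "space m = UNIV" by (rule space_eq_UNIV_if_sets_borel[OF sm])
  have mass': "emeasure M' (space m) = emeasure N' (space m)"
    by (rule emeasure_space_cancel_common_part[OF fin(1) sets(2,3)]) (use mass eq space in simp)
  show ?thesis
    by (rule that[OF fin sm _ _ eq]) (use sets(2,3) sm G space mass' in simp_all)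
qed

lemma coupling_marginals:
  fixes \<rho> :: "('a::topological_space \<times> 'b::topological_space) measure"
  assumes "coupling \<rho> M N"
  shows "finite_measure M" "finite_measure N" "emeasure M UNIV = emeasure N UNIV"
    and "emeasure M UNIV = emeasure \<rho> UNIV"
proof -
  have fin: "finite_measure \<rho>" and sets: "sets \<rho> = sets borel"
    and M: "M = distr \<rho> borel fst" and N: "N = distr \<rho> borel snd"
    using assms by (simp_all add: coupling_def)
  have fst: "continuous_on UNIV (fst :: 'a \<times> 'b \<Rightarrow> 'a)" and snd: "continuous_on UNIV (snd :: 'a \<times> 'b \<Rightarrow> 'b)"
    by (intro continuous_intros)+
  show "finite_measure M" "finite_measure N"
    unfolding M N using fin sets fst snd by (simp_all add: finite_measure_distr_continuous)
  show "emeasure M UNIV = emeasure \<rho> UNIV"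
    unfolding M using emeasure_distr_continuous[OF sets fst, of UNIV] by simp
  then show "emeasure M UNIV = emeasure N UNIV"
    unfolding N using emeasure_distr_continuous[OF sets snd, of UNIV] by simp
qed

lemma coupling_through_common_part:
  fixes m :: "'a::{second_countable_topology, t2_space} measure"
  assumes fm: "finite_measure m" and sm: "sets m = sets borel"
    and G: "G \<in> sets borel" "emeasure M' (UNIV - G) = 0" "emeasure N' G = 0"
    and \<rho>: "coupling \<rho> M' N'"
  shows "coupling (add_measure (diagonal_measure m) \<rho>) (add_measure m M') (add_measure m N')"
    and "measure (add_measure (diagonal_measure m) \<rho>) {z. fst z \<noteq> snd z}
      = tv_dist (add_measure m M') (add_measure m N')"
proof -
  have space: "space m = UNIV" by (rule space_eq_UNIV_if_sets_borel[OF sm])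
  have "sets M' = sets borel" "sets N' = sets borel"
    using \<rho> unfolding coupling_def by (metis sets_distr)+
  then have sets: "sets M' = sets m" "sets N' = sets m" using sm by simp_all
  show "coupling (add_measure (diagonal_measure m) \<rho>) (add_measure m M') (add_measure m N')"
    by (rule coupling_add_measure[OF coupling_diagonal_measure[OF fm sm] \<rho>])
  have "measure (add_measure (diagonal_measure m) \<rho>) {z. fst z \<noteq> snd z} = measure \<rho> {z. fst z \<noteq> snd z}"
    by (rule measure_add_diagonal_measure_off_diagonal[OF fm sm \<rho> offdiagonal_in_sets_borel]) simp
  also have "\<dots> = measure M' UNIV"
    by (rule measure_off_diagonal_coupling_singular[OF \<rho> G])
  also have "\<dots> = tv_dist (add_measure m M') (add_measure m N')"
    using tv_dist_common_part[OF fm coupling_marginals(1,2)[OF \<rho>] sets, of G] coupling_marginals(3)[OF \<rho>]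
      G sm space by simp
  finally show "measure (add_measure (diagonal_measure m) \<rho>) {z. fst z \<noteq> snd z}
      = tv_dist (add_measure m M') (add_measure m N')" .
qed

lemma maximal_coupling:
  fixes M N :: "'a::{second_countable_topology, t2_space} measure"
  assumes "finite_measure M" "finite_measure N" "sets M = sets borel" "sets N = sets borel"
    and "emeasure M UNIV = emeasure N UNIV"
  obtains \<kappa> where "coupling \<kappa> M N" "measure \<kappa> {z. fst z \<noteq> snd z} = tv_dist M N"
proof -
  obtain m M' N' G where fin: "finite_measure m" "finite_measure M'" "finite_measure N'"
    and sets: "sets m = sets borel" "sets M' = sets borel" "sets N' = sets borel"
    and eq: "M = add_measure m M'" "N = add_measure m N'"
    and G: "G \<in> sets borel" "emeasure M' (UNIV - G) = 0" "emeasure N' G = 0"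
    and mass: "emeasure M' UNIV = emeasure N' UNIV"
    by (rule common_part_decomposition_borel[OF assms])
  obtain \<rho> where \<rho>: "coupling \<rho> M' N'" by (rule coupling_scaled_product[OF fin(2,3) sets(2,3) mass])
  show ?thesis
    using coupling_through_common_part[OF fin(1) sets(1) G \<rho>] unfolding eq[symmetric] by (rule that)
qed

lemma prob_space_coupling:
  fixes \<pi> :: "('a::topological_space \<times> 'b::topological_space) measure"
  assumes "coupling \<pi> P Q" "prob_space P"
  shows "prob_space \<pi>"
proof (rule prob_spaceI)
  interpret prob_space P by fact
  have "sets P = sets borel" "sets \<pi> = sets borel"
    using assms(1) unfolding coupling_def by (metis sets_distr)+
  then have "space \<pi> = UNIV" "space P = UNIV" by (simp_all add: space_eq_UNIV_if_sets_borel)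
  then show "emeasure \<pi> (space \<pi>) = 1"
    using coupling_marginals(4)[OF assms(1)] emeasure_space_1 by simp
qed

lemma measure_add_diagonal_measure_first_coordinates:
  fixes m :: "('a::{second_countable_topology, t2_space} \<times> 'b::second_countable_topology) measure"
  assumes "finite_measure m" "sets m = sets borel" "coupling \<rho> M N"
    and \<rho>_\<kappa>: "distr \<rho> borel (\<lambda>z. (fst (fst z), fst (snd z))) = \<kappa>"
  shows "measure (add_measure (diagonal_measure m) \<rho>) {z. fst (fst z) \<noteq> fst (snd z)}
    = measure \<kappa> {z. fst z \<noteq> snd z}"
proof -
  have "{z :: ('a \<times> 'b) \<times> ('a \<times> 'b). fst (fst z) \<noteq> fst (snd z)} \<in> sets borel"
    by (intro borel_open open_Collect_neq continuous_intros)
  then have "measure (add_measure (diagonal_measure m) \<rho>) {z. fst (fst z) \<noteq> fst (snd z)}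
      = measure \<rho> {z. fst (fst z) \<noteq> fst (snd z)}"
    by (rule measure_add_diagonal_measure_off_diagonal[OF assms(1-3)]) simp
  also have "\<dots> = measure \<kappa> {z. fst z \<noteq> snd z}"
    using assms(3) unfolding \<rho>_\<kappa>[symmetric] coupling_def
    by (simp add: measure_distr measurable_borel_if_continuous continuous_intros offdiagonal_in_sets_borel
        space_eq_UNIV_if_sets_borel vimage_def)
  finally show ?thesis .
qed

lemma coupling_lift_marginal_coupling:
  fixes A :: "('a::polish_space \<times> 'b::polish_space) measure"
    and B :: "('c::polish_space \<times> 'd::polish_space) measure"
  assumes fA: "finite_measure A" and sA: "sets A = sets borel"
    and fB: "finite_measure B" and sB: "sets B = sets borel"
    and \<kappa>: "coupling \<kappa> (distr A borel fst) (distr B borel fst)"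
  obtains \<rho> where "coupling \<rho> A B" "distr \<rho> borel (\<lambda>z. (fst (fst z), fst (snd z))) = \<kappa>"
proof -
  have f\<kappa>: "finite_measure \<kappa>" and s\<kappa>: "sets \<kappa> = sets borel"
    and \<kappa>1: "distr \<kappa> borel fst = distr A borel fst" and \<kappa>2: "distr \<kappa> borel snd = distr B borel fst"
    using \<kappa> by (simp_all add: coupling_def)
  obtain \<gamma>1 :: "('a \<times> 'b \<times> 'c) measure" where f\<gamma>1: "finite_measure \<gamma>1" and s\<gamma>1: "sets \<gamma>1 = sets borel"
    and \<gamma>1A: "distr \<gamma>1 borel (\<lambda>p. (fst p, fst (snd p))) = A"
    and \<gamma>1\<kappa>: "distr \<gamma>1 borel (\<lambda>p. (fst p, snd (snd p))) = \<kappa>"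
    by (rule gluing[OF fA f\<kappa> sA s\<kappa> \<kappa>1[symmetric]])
  define \<gamma>1' where "\<gamma>1' = distr \<gamma>1 borel (\<lambda>p. (snd (snd p), (fst p, fst (snd p))))"
  have f\<gamma>1': "finite_measure \<gamma>1'" and s\<gamma>1': "sets \<gamma>1' = sets borel"
    unfolding \<gamma>1'_def using f\<gamma>1 s\<gamma>1 by (auto intro!: finite_measure_distr_continuous continuous_intros)
  have "distr \<gamma>1' borel fst = distr \<gamma>1 borel (\<lambda>p. snd (snd p))"
    unfolding \<gamma>1'_def using s\<gamma>1 by (subst distr_distr_continuous) (auto intro!: continuous_intros)
  also have "\<dots> = distr \<kappa> borel snd"
    unfolding \<gamma>1\<kappa>[symmetric] using s\<gamma>1 by (subst distr_distr_continuous) (auto intro!: continuous_intros)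
  finally have "distr B borel fst = distr \<gamma>1' borel fst" using \<kappa>2 by simp
  then obtain \<gamma>2 :: "('c \<times> 'd \<times> ('a \<times> 'b)) measure" where f\<gamma>2: "finite_measure \<gamma>2"
    and s\<gamma>2: "sets \<gamma>2 = sets borel"
    and \<gamma>2B: "distr \<gamma>2 borel (\<lambda>p. (fst p, fst (snd p))) = B"
    and \<gamma>2\<gamma>1': "distr \<gamma>2 borel (\<lambda>p. (fst p, snd (snd p))) = \<gamma>1'"
    by (rule gluing[OF fB f\<gamma>1' sB s\<gamma>1'])
  define \<rho> where "\<rho> = distr \<gamma>2 borel (\<lambda>p. (snd (snd p), (fst p, fst (snd p))))"
  have "finite_measure \<rho>" "sets \<rho> = sets borel"
    unfolding \<rho>_def using f\<gamma>2 s\<gamma>2 by (auto intro!: finite_measure_distr_continuous continuous_intros)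
  moreover have "distr \<rho> borel fst = A"
  proof -
    have "distr \<rho> borel fst = distr \<gamma>2 borel (\<lambda>p. snd (snd p))"
      unfolding \<rho>_def using s\<gamma>2 by (subst distr_distr_continuous) (auto intro!: continuous_intros)
    also have "\<dots> = distr \<gamma>1' borel snd"
      unfolding \<gamma>2\<gamma>1'[symmetric] using s\<gamma>2 by (subst distr_distr_continuous) (auto intro!: continuous_intros)
    also have "\<dots> = distr \<gamma>1 borel (\<lambda>p. (fst p, fst (snd p)))"
      unfolding \<gamma>1'_def using s\<gamma>1 by (subst distr_distr_continuous) (auto intro!: continuous_intros)
    finally show ?thesis using \<gamma>1A by simp
  qed
  moreover have "distr \<rho> borel snd = B"
    unfolding \<rho>_def \<gamma>2B[symmetric] using s\<gamma>2 by (subst distr_distr_continuous) (auto intro!: continuous_intros)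
  moreover have "distr \<rho> borel (\<lambda>z. (fst (fst z), fst (snd z))) = \<kappa>"
  proof -
    have "distr \<rho> borel (\<lambda>z. (fst (fst z), fst (snd z))) = distr \<gamma>2 borel (\<lambda>p. (fst (snd (snd p)), fst p))"
      unfolding \<rho>_def using s\<gamma>2 by (subst distr_distr_continuous) (auto intro!: continuous_intros)
    also have "\<dots> = distr \<gamma>1' borel (\<lambda>p. (fst (snd p), fst p))"
      unfolding \<gamma>2\<gamma>1'[symmetric] using s\<gamma>2 by (subst distr_distr_continuous) (auto intro!: continuous_intros)
    also have "\<dots> = distr \<gamma>1 borel (\<lambda>p. (fst p, snd (snd p)))"
      unfolding \<gamma>1'_def using s\<gamma>1 by (subst distr_distr_continuous) (auto intro!: continuous_intros)
    finally show ?thesis using \<gamma>1\<kappa> by simp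
  qed
  ultimately show ?thesis by (intro that) (simp_all add: coupling_def)
qed

lemma tv_dist_distr_add_measure:
  assumes fin: "finite_measure m" "finite_measure M" "finite_measure N"
    and sets: "sets M = sets m" "sets N = sets m" and f: "f \<in> measurable m L"
  shows "tv_dist (distr (add_measure m M) L f) (distr (add_measure m N) L f) = tv_dist (distr M L f) (distr N L f)"
proof -
  have "f \<in> measurable M L" "f \<in> measurable N L"
    using f by (simp_all only: measurable_cong_sets[OF sets(1) refl] measurable_cong_sets[OF sets(2) refl])
  then have "finite_measure (distr M L f)" "finite_measure (distr N L f)"
    using fin by (simp_all add: finite_measure.finite_measure_distr)
  then show ?thesis
    using fin(1) f by (simp add: distr_add_measure[OF sets(1) f] distr_add_measure[OF sets(2) f]
        tv_dist_add_measure finite_measure.finite_measure_distr)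
qed

theorem lemma1:
  fixes P Q :: "('x::polish_space \<times> 'y::polish_space) measure"
  assumes "prob_space P" and "sets P = sets borel"
    and "prob_space Q" and "sets Q = sets borel"
  shows "\<exists>\<pi> :: (('x \<times> 'y) \<times> ('x \<times> 'y)) measure.
           prob_space \<pi> \<and> sets \<pi> = sets borel \<and>
           distr \<pi> borel fst = P \<and> distr \<pi> borel snd = Q \<and>
           measure \<pi> {z. fst z \<noteq> snd z} = tv_dist P Q \<and>
           measure \<pi> {z. fst (fst z) \<noteq> fst (snd z)} =
             tv_dist (distr P borel fst) (distr Q borel fst)"
proof -
  interpret P: prob_space P by fact
  interpret Q: prob_space Q by fact
  obtain m P' Q' G where fin: "finite_measure m" "finite_measure P'" "finite_measure Q'"
    and sets: "sets m = sets borel" "sets P' = sets borel" "sets Q' = sets borel"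
    and eq: "P = add_measure m P'" "Q = add_measure m Q'"
    and G: "G \<in> sets borel" "emeasure P' (UNIV - G) = 0" "emeasure Q' G = 0"
    and mass: "emeasure P' UNIV = emeasure Q' UNIV"
    by (rule common_part_decomposition_borel[OF P.finite_measure_axioms Q.finite_measure_axioms assms(2,4)])
      (use P.emeasure_space_1 Q.emeasure_space_1 assms(2,4) in \<open>simp add: space_eq_UNIV_if_sets_borel\<close>)
  obtain \<kappa> where \<kappa>: "coupling \<kappa> (distr P' borel fst) (distr Q' borel fst)"
    and \<kappa>_tv: "measure \<kappa> {z. fst z \<noteq> snd z} = tv_dist (distr P' borel fst) (distr Q' borel fst)"
    by (rule maximal_coupling[of "distr P' borel fst" "distr Q' borel fst"])
      (use fin sets mass in \<open>simp_all add: finite_measure_distr_continuous emeasure_distr_continuous continuous_intros\<close>)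
  obtain \<rho> where \<rho>: "coupling \<rho> P' Q'" and \<rho>_\<kappa>: "distr \<rho> borel (\<lambda>z. (fst (fst z), fst (snd z))) = \<kappa>"
    by (rule coupling_lift_marginal_coupling[OF fin(2) sets(2) fin(3) sets(3) \<kappa>])
  define \<pi> where "\<pi> = add_measure (diagonal_measure m) \<rho>"
  have \<pi>: "coupling \<pi> P Q" "measure \<pi> {z. fst z \<noteq> snd z} = tv_dist P Q"
    using coupling_through_common_part[OF fin(1) sets(1) G \<rho>] unfolding \<pi>_def eq[symmetric] .
  have "measure \<pi> {z. fst (fst z) \<noteq> fst (snd z)} = measure \<kappa> {z. fst z \<noteq> snd z}"
    unfolding \<pi>_def by (rule measure_add_diagonal_measure_first_coordinates[OF fin(1) sets(1) \<rho> \<rho>_\<kappa>])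
  also have "\<dots> = tv_dist (distr P borel fst) (distr Q borel fst)"
    unfolding \<kappa>_tv eq using fin sets
    by (simp add: tv_dist_distr_add_measure measurable_borel_if_continuous continuous_intros)
  finally show ?thesis
    using \<pi> prob_space_coupling[OF \<pi>(1) assms(1)] unfolding coupling_def by blast
qed

end
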